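(* Let $n=k+d$, let $\Theta$ be an antisymmetric $n\times n$ real matrix, let $r=(r_1,\ldots,r_k,0_d)$ with $r_j>0$ for $j\le k$, and let $\alpha$ be the associated dynamics. Let $0<\beta<\infty$ and let $\varphi$ be a $\mathrm{KMS}_\beta$ state of $(\mathcal{T}_r(\mathbb{N}^n,\sigma_\Theta),\alpha)$. Then $\varphi$ restricts to a trace on the C*-subalgebra $C^*(L_x:x\in0_k\times\mathbb{N}^d)$ and \[ \varphi(L_pL_xL_y^*L_q^* )=\delta_{p,q}e^{-\beta\langle p,r\rangle}\varphi(L_xL_y^* ) \] for all $p,q\in\mathbb{N}^k\times0_d$ and $x,y\in0_k\times\mathbb{N}^d$.
   Context: $\sigma_\Theta(x,y)=e^{-\pi i\langle x,\Theta y\rangle}$; $L_p$ is the isometry on $\ell^2(\mathbb{N}^n)$ with $L_p\delta_q=\sigma_\Theta(p,q)\delta_{p+q}$ and $\mathcal{T}_r(\mathbb{N}^n,\sigma_\Theta)$ is the C*-algebra they generate. $\alpha_t(L_p)=e^{i\langle p,r\rangle t}L_p$. A state $\varphi$ is $\mathrm{KMS}_\beta$ if $\varphi(AB)=\varphi(B\alpha_{i\beta}(A))$ for all $\alpha$-analytic $A$ and all $B$. $0_k$ is the zero of $\mathbb{N}^k$; $\delta_{p,q}$ is the Kronecker delta. *)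

theory Defs
  imports "HOL-Analysis.Analysis"
begin

text \<open>Multi-indices in N^n are functions nat => nat vanishing
  from index n on; vectors of l^2(N^n) are complex functions on multi-indices,
  supported on N^n and square summable; bounded operators are maps on such
  functions, normalised to send everything outside l^2(N^n) to 0.\<close>

type_synonym idx = "nat \<Rightarrow> nat"
type_synonym vec = "idx \<Rightarrow> complex"
type_synonym op = "vec \<Rightarrow> vec"

definition Nn :: "nat \<Rightarrow> idx set" where
  "Nn n = {p. \<forall>i\<ge>n. p i = 0}"

definition l2 :: "nat \<Rightarrow> vec set" where
  "l2 n = {f. (\<forall>q. q \<notin> Nn n \<longrightarrow> f q = 0) \<and> (\<lambda>q. (cmod (f q))^2) summable_on UNIV}"

definition l2norm :: "vec \<Rightarrow> real" where
  "l2norm f = sqrt (infsum (\<lambda>q. (cmod (f q))^2) UNIV)"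

definition inner2 :: "vec \<Rightarrow> vec \<Rightarrow> complex" where
  "inner2 f g = infsum (\<lambda>q. cnj (f q) * g q) UNIV"

definition bop :: "nat \<Rightarrow> op \<Rightarrow> bool" where
  "bop n T \<longleftrightarrow> (\<forall>f\<in>l2 n. T f \<in> l2 n)
     \<and> (\<forall>f\<in>l2 n. \<forall>g\<in>l2 n. \<forall>c::complex. T (\<lambda>q. f q + c * g q) = (\<lambda>q. T f q + c * T g q))
     \<and> (\<exists>C. \<forall>f\<in>l2 n. l2norm (T f) \<le> C * l2norm f)
     \<and> (\<forall>f. f \<notin> l2 n \<longrightarrow> T f = (\<lambda>q. 0))"

definition opnorm :: "nat \<Rightarrow> op \<Rightarrow> real" where
  "opnorm n T = Sup {l2norm (T f) | f. f \<in> l2 n \<and> l2norm f \<le> 1}"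

definition op_add :: "op \<Rightarrow> op \<Rightarrow> op" where
  "op_add S T = (\<lambda>f q. S f q + T f q)"

definition op_scale :: "complex \<Rightarrow> op \<Rightarrow> op" where
  "op_scale c T = (\<lambda>f q. c * T f q)"

definition op_diff :: "op \<Rightarrow> op \<Rightarrow> op" where
  "op_diff S T = (\<lambda>f q. S f q - T f q)"

definition adj :: "nat \<Rightarrow> op \<Rightarrow> op" where
  "adj n T = (\<lambda>g. if g \<in> l2 n then (THE h. h \<in> l2 n \<and> (\<forall>f\<in>l2 n. inner2 (T f) g = inner2 f h))
                 else (\<lambda>q. 0))"

definition cstar_closed :: "nat \<Rightarrow> op set \<Rightarrow> bool" where
  "cstar_closed n A \<longleftrightarrow> A \<subseteq> {T. bop n T}
     \<and> (\<forall>S\<in>A. \<forall>T\<in>A. op_add S T \<in> A)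
     \<and> (\<forall>c. \<forall>T\<in>A. op_scale c T \<in> A)
     \<and> (\<forall>S\<in>A. \<forall>T\<in>A. S \<circ> T \<in> A)
     \<and> (\<forall>T\<in>A. adj n T \<in> A)
     \<and> (\<forall>X T. (\<forall>j. X j \<in> A) \<and> bop n T \<and> (\<lambda>j. opnorm n (op_diff (X j) T)) \<longlonglongrightarrow> 0 \<longrightarrow> T \<in> A)"

definition cstar_gen :: "nat \<Rightarrow> op set \<Rightarrow> op set" where
  "cstar_gen n G = \<Inter>{A. G \<subseteq> A \<and> cstar_closed n A}"

definition pair_Theta :: "nat \<Rightarrow> (nat \<Rightarrow> nat \<Rightarrow> real) \<Rightarrow> idx \<Rightarrow> idx \<Rightarrow> real" where
  "pair_Theta n \<Theta> x y = (\<Sum>i<n. \<Sum>j<n. real (x i) * \<Theta> i j * real (y j))"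

definition sigma :: "nat \<Rightarrow> (nat \<Rightarrow> nat \<Rightarrow> real) \<Rightarrow> idx \<Rightarrow> idx \<Rightarrow> complex" where
  "sigma n \<Theta> x y = exp (- (pi * \<i> * complex_of_real (pair_Theta n \<Theta> x y)))"

definition pair_r :: "nat \<Rightarrow> idx \<Rightarrow> (nat \<Rightarrow> real) \<Rightarrow> real" where
  "pair_r n p r = (\<Sum>i<n. real (p i) * r i)"

text \<open>The isometry L_p: L_p delta_q = sigma(p,q) delta_(p+q).\<close>
definition Lop :: "nat \<Rightarrow> (nat \<Rightarrow> nat \<Rightarrow> real) \<Rightarrow> idx \<Rightarrow> op" where
  "Lop n \<Theta> p = (\<lambda>f. if f \<in> l2 n then
      (\<lambda>m. if (\<forall>i. p i \<le> m i) then sigma n \<Theta> p (\<lambda>i. m i - p i) * f (\<lambda>i. m i - p i) else 0)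
    else (\<lambda>q. 0))"

definition Toeplitz :: "nat \<Rightarrow> (nat \<Rightarrow> nat \<Rightarrow> real) \<Rightarrow> op set" where
  "Toeplitz n \<Theta> = cstar_gen n {Lop n \<Theta> p | p. p \<in> Nn n}"

text \<open>The dynamics alpha_t(L_p) = e^(i<p,r>t) L_p, implemented spatially by the
  diagonal unitaries U_t delta_q = e^(i<q,r>t) delta_q, alpha_t(T) = U_t T U_t^*.\<close>
definition Ut :: "nat \<Rightarrow> (nat \<Rightarrow> real) \<Rightarrow> real \<Rightarrow> op" where
  "Ut n r t = (\<lambda>f. if f \<in> l2 n then (\<lambda>q. exp (\<i> * complex_of_real (t * pair_r n q r)) * f q)
                  else (\<lambda>q. 0))"

definition dyn :: "nat \<Rightarrow> (nat \<Rightarrow> real) \<Rightarrow> real \<Rightarrow> op \<Rightarrow> op" where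
  "dyn n r t T = Ut n r t \<circ> T \<circ> Ut n r (- t)"

definition is_state :: "nat \<Rightarrow> op set \<Rightarrow> (op \<Rightarrow> complex) \<Rightarrow> bool" where
  "is_state n A \<phi> \<longleftrightarrow>
     (\<forall>S\<in>A. \<forall>T\<in>A. \<forall>c. \<phi> (op_add S (op_scale c T)) = \<phi> S + c * \<phi> T)
     \<and> (\<forall>T\<in>A. Im (\<phi> (adj n T \<circ> T)) = 0 \<and> Re (\<phi> (adj n T \<circ> T)) \<ge> 0)
     \<and> \<phi> (\<lambda>f. if f \<in> l2 n then f else (\<lambda>q. 0)) = 1"

definition op_entire :: "nat \<Rightarrow> (complex \<Rightarrow> op) \<Rightarrow> bool" where
  "op_entire n F \<longleftrightarrow> (\<forall>z. \<exists>D. bop n D \<and>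
     ((\<lambda>h. opnorm n (\<lambda>f q. (F (z + h) f q - F z f q) / h - D f q)) \<longlongrightarrow> 0) (at 0))"

text \<open>F is an entire extension of t |-> alpha_t(A) with values in the algebra;
  A is alpha-analytic iff such an F exists, and then alpha_z(A) = F z.\<close>
definition analytic_ext :: "nat \<Rightarrow> (nat \<Rightarrow> real) \<Rightarrow> op set \<Rightarrow> op \<Rightarrow> (complex \<Rightarrow> op) \<Rightarrow> bool" where
  "analytic_ext n r Alg A F \<longleftrightarrow> A \<in> Alg \<and> (\<forall>z. F z \<in> Alg) \<and> op_entire n F
     \<and> (\<forall>t::real. F (complex_of_real t) = dyn n r t A)"

definition is_KMS :: "nat \<Rightarrow> (nat \<Rightarrow> real) \<Rightarrow> op set \<Rightarrow> real \<Rightarrow> (op \<Rightarrow> complex) \<Rightarrow> bool" where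
  "is_KMS n r Alg \<beta> \<phi> \<longleftrightarrow> is_state n Alg \<phi> \<and>
     (\<forall>A F B. analytic_ext n r Alg A F \<and> B \<in> Alg \<longrightarrow>
        \<phi> (A \<circ> B) = \<phi> (B \<circ> F (\<i> * complex_of_real \<beta>)))"

end

theory Submission
  imports Defs
begin

text \<open>The dynamics is implemented by diagonal unitaries U_t, and every L_p is an eigenoperator,
  \<alpha>_t(L_p) = e^(i t \<langle>p,r\<rangle>) L_p. For an eigenoperator T of frequency c the KMS condition
  becomes \<phi>(T B) = e^(-\<beta> c) \<phi>(B T).

  The L_x with x \<in> 0_k \<times> \<nat>^d have frequency 0: they commute with all U_t, and so does the
  C*-algebra they generate, because the commutant of the U_t is a C*-algebra. Hence \<phi> is a trace
  on it.

  For the second claim, the KMS condition for L_p gives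
  \<phi>(L_p L_x L_y* L_q*) = e^(-\<beta>\<langle>p,r\<rangle>) \<phi>(L_x L_y* L_q* L_p), and L_p* L_p = 1. If p \<noteq> q, write
  p = a + c and q = b + c with a, b of disjoint support. The twisted commutation relations make
  L_x L_y* L_q* L_p a unimodular multiple of N = L_(x+a) L_(y+b)*. The KMS condition for N against
  L_a (if a \<noteq> 0) or L_b* (otherwise), whose frequency is nonzero because r_j > 0 for j \<le> k,
  equates \<phi>(N) with a multiple of \<phi>(N) by a factor of modulus e^(\<plusminus>\<beta>\<langle>a,r\<rangle>) resp.
  e^(\<plusminus>\<beta>\<langle>b,r\<rangle>) \<noteq> 1, so \<phi>(N) = 0.\<close>

section \<open>Square summable functions\<close>

definition sqmod :: "vec \<Rightarrow> idx \<Rightarrow> real" where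
  "sqmod f = (\<lambda>q. (cmod (f q))^2)"

definition sqnorm :: "vec \<Rightarrow> real" where
  "sqnorm f = infsum (sqmod f) UNIV"

definition basis_vec :: "idx \<Rightarrow> vec" where
  "basis_vec m = (\<lambda>q. if q = m then 1 else 0)"

definition truncate_vec :: "idx set \<Rightarrow> vec \<Rightarrow> vec" where
  "truncate_vec G a = (\<lambda>q. if q \<in> G then a q else 0)"

lemma l2_sqmod_summable: "f \<in> l2 n \<Longrightarrow> sqmod f summable_on UNIV"
  by (simp add: l2_def sqmod_def)

lemma l2_vanishes: "f \<in> l2 n \<Longrightarrow> q \<notin> Nn n \<Longrightarrow> f q = 0"
  by (simp add: l2_def)

lemma l2I: "(\<And>q. q \<notin> Nn n \<Longrightarrow> f q = 0) \<Longrightarrow> sqmod f summable_on UNIV \<Longrightarrow> f \<in> l2 n"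
  by (simp add: l2_def sqmod_def)

lemma l2_eqI:
  assumes "f \<in> l2 n" "g \<in> l2 n" "\<And>m. m \<in> Nn n \<Longrightarrow> f m = g m"
  shows "f = g"
proof
  fix m show "f m = g m"
    using assms l2_vanishes[of f n m] l2_vanishes[of g n m] by (cases "m \<in> Nn n") auto
qed

lemma sqmod_nonneg [simp]: "0 \<le> sqmod f q"
  by (simp add: sqmod_def)

lemma sqnorm_nonneg: "0 \<le> sqnorm f"
  unfolding sqnorm_def by (rule infsum_nonneg) simp

lemma l2norm_eq_sqrt_sqnorm: "l2norm f = sqrt (sqnorm f)"
  by (simp add: l2norm_def sqnorm_def sqmod_def)

lemma l2norm_nonneg: "0 \<le> l2norm f"
  by (simp add: l2norm_eq_sqrt_sqnorm sqnorm_nonneg)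

lemma l2norm_power2: "(l2norm f)^2 = sqnorm f"
  by (simp add: l2norm_eq_sqrt_sqnorm sqnorm_nonneg)

lemma zero_in_l2 [simp]: "(\<lambda>q. 0) \<in> l2 n"
  by (rule l2I) (auto simp: sqmod_def)

lemma l2norm_zero [simp]: "l2norm (\<lambda>q. 0) = 0"
  by (simp add: l2norm_eq_sqrt_sqnorm sqnorm_def sqmod_def)

lemma sqnorm_eq_0_imp_zero:
  assumes "sqmod f summable_on UNIV" "sqnorm f = 0"
  shows "f = (\<lambda>q. 0)"
proof
  fix q
  have "sqmod f q = 0"
    using nonneg_infsum_le_0D[of "sqmod f" UNIV q] assms by (simp add: sqnorm_def)
  thus "f q = 0" by (simp add: sqmod_def)
qed

lemma l2norm_eq_0_imp_zero: "sqmod f summable_on UNIV \<Longrightarrow> l2norm f = 0 \<Longrightarrow> f = (\<lambda>q. 0)"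
  using sqnorm_eq_0_imp_zero sqnorm_nonneg by (simp add: l2norm_eq_sqrt_sqnorm)

lemma cmod_le_l2norm:
  assumes "sqmod f summable_on UNIV"
  shows "cmod (f m) \<le> l2norm f"
proof -
  have "sum (sqmod f) {m} \<le> infsum (sqmod f) UNIV"
    by (rule finite_sum_le_infsum[OF assms]) auto
  thus ?thesis by (simp add: l2norm_eq_sqrt_sqnorm sqnorm_def sqmod_def real_le_rsqrt)
qed

lemma sqmod_truncate_vec_has_sum:
  assumes "finite G"
  shows "(sqmod (truncate_vec G a) has_sum sum (sqmod a) G) UNIV"
proof -
  have "(sqmod a has_sum sum (sqmod a) G) G" by (rule has_sum_finite[OF assms])
  thus ?thesis by (subst has_sum_cong_neutral[where T=G]) (auto simp: sqmod_def truncate_vec_def)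
qed

lemma two_mult_le_weighted_squares:
  fixes x y t :: real
  assumes "t > 0"
  shows "2 * (x * y) \<le> t * x^2 + y^2 / t"
proof -
  have "t * x^2 + y^2 / t - 2 * (x * y) = (t * x - y)^2 / t"
    using assms by (simp add: field_simps power2_eq_square)
  moreover have "0 \<le> (t * x - y)^2 / t" using assms by simp
  ultimately show ?thesis by linarith
qed

lemma cmod_mult_summable:
  assumes "sqmod f summable_on UNIV" "sqmod g summable_on UNIV"
  shows "(\<lambda>q. cmod (f q) * cmod (g q)) summable_on UNIV"
proof (rule summable_on_comparison_test)
  show "(\<lambda>q. sqmod f q + sqmod g q) summable_on UNIV" using assms by (rule summable_on_add)
  fix q
  have "2 * cmod (f q) * cmod (g q) \<le> sqmod f q + sqmod g q"
    using sum_squares_bound by (simp add: sqmod_def)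
  moreover have "0 \<le> cmod (f q) * cmod (g q)" by simp
  ultimately show "cmod (f q) * cmod (g q) \<le> sqmod f q + sqmod g q" by linarith
qed simp

lemma Cauchy_Schwarz_cmod:
  assumes f: "sqmod f summable_on UNIV" and g: "sqmod g summable_on UNIV"
  shows "infsum (\<lambda>q. cmod (f q) * cmod (g q)) UNIV \<le> l2norm f * l2norm g"
proof (cases "sqnorm f = 0 \<or> sqnorm g = 0")
  case True
  hence "f = (\<lambda>q. 0) \<or> g = (\<lambda>q. 0)" using sqnorm_eq_0_imp_zero f g by blast
  thus ?thesis by (auto simp: l2norm_nonneg)
next
  case False
  define a b where "a = l2norm f" and "b = l2norm g"
  have a: "a > 0" "a^2 = sqnorm f" and b: "b > 0" "b^2 = sqnorm g"
    using False sqnorm_nonneg[of f] sqnorm_nonneg[of g] l2norm_power2[of f] l2norm_power2[of g]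
    unfolding a_def b_def l2norm_eq_sqrt_sqnorm by auto
  define t where "t = b / a"
  have t: "t > 0" using a b by (simp add: t_def)
  have "2 * infsum (\<lambda>q. cmod (f q) * cmod (g q)) UNIV
      = infsum (\<lambda>q. 2 * (cmod (f q) * cmod (g q))) UNIV"
    by (simp add: infsum_cmult_right')
  also have "\<dots> \<le> infsum (\<lambda>q. t * sqmod f q + sqmod g q / t) UNIV"
  proof (rule infsum_mono)
    show "(\<lambda>q. 2 * (cmod (f q) * cmod (g q))) summable_on UNIV"
      using cmod_mult_summable[OF f g] by (rule summable_on_cmult_right)
    show "(\<lambda>q. t * sqmod f q + sqmod g q / t) summable_on UNIV"
      using summable_on_cmult_right[OF f, of t] summable_on_cmult_left[OF g, of "inverse t"]
      by (simp add: divide_inverse summable_on_add)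
    show "2 * (cmod (f q) * cmod (g q)) \<le> t * sqmod f q + sqmod g q / t" for q
      using two_mult_le_weighted_squares[OF t] by (simp add: sqmod_def)
  qed
  also have "\<dots> = t * sqnorm f + sqnorm g / t"
    using f g unfolding sqnorm_def
    by (subst infsum_add) (auto simp: infsum_cmult_right' divide_inverse infsum_cmult_left'
        summable_on_cmult_right summable_on_cmult_left)
  also have "\<dots> = 2 * (a * b)"
    using a b unfolding t_def by (simp add: a(2)[symmetric] b(2)[symmetric] power2_eq_square field_simps)
  finally show ?thesis by (simp add: a_def b_def)
qed

lemma sqmod_scale: "sqmod (\<lambda>q. c * f q) = (\<lambda>q. (cmod c)^2 * sqmod f q)"
  by (auto simp: sqmod_def norm_mult power_mult_distrib)

lemma l2norm_scale: "l2norm (\<lambda>q. c * f q) = cmod c * l2norm f"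
  by (simp add: l2norm_eq_sqrt_sqnorm sqnorm_def sqmod_scale infsum_cmult_right' real_sqrt_mult)

lemma sqmod_add_le: "sqmod (\<lambda>q. f q + g q) q \<le> sqmod f q + 2 * (cmod (f q) * cmod (g q)) + sqmod g q"
proof -
  have "cmod (f q + g q) \<le> cmod (f q) + cmod (g q)" by (rule norm_triangle_ineq)
  hence "(cmod (f q + g q))^2 \<le> (cmod (f q) + cmod (g q))^2" by (rule power_mono) simp
  thus ?thesis by (simp add: sqmod_def power2_eq_square algebra_simps)
qed

lemma sqmod_add_summable:
  assumes f: "sqmod f summable_on UNIV" and g: "sqmod g summable_on UNIV"
  shows "sqmod (\<lambda>q. f q + g q) summable_on UNIV"
proof (rule summable_on_comparison_test)
  show "(\<lambda>q. sqmod f q + 2 * (cmod (f q) * cmod (g q)) + sqmod g q) summable_on UNIV"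
    by (intro summable_on_add summable_on_cmult_right cmod_mult_summable f g)
qed (auto intro: sqmod_add_le)

lemma l2norm_triangle:
  assumes f: "sqmod f summable_on UNIV" and g: "sqmod g summable_on UNIV"
  shows "l2norm (\<lambda>q. f q + g q) \<le> l2norm f + l2norm g"
proof -
  have "sqnorm (\<lambda>q. f q + g q)
      \<le> infsum (\<lambda>q. sqmod f q + 2 * (cmod (f q) * cmod (g q)) + sqmod g q) UNIV"
    unfolding sqnorm_def
    by (intro infsum_mono sqmod_add_summable f g summable_on_add summable_on_cmult_right
        cmod_mult_summable sqmod_add_le)
  also have "\<dots> = sqnorm f + 2 * infsum (\<lambda>q. cmod (f q) * cmod (g q)) UNIV + sqnorm g"
    unfolding sqnorm_def
    by (intro infsumI has_sum_add has_sum_cmult_right has_sum_infsum cmod_mult_summable f g)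
  also have "\<dots> \<le> (l2norm f + l2norm g)^2"
    using Cauchy_Schwarz_cmod[OF f g] by (simp add: power2_sum l2norm_power2)
  finally have "sqnorm (\<lambda>q. f q + g q) \<le> (l2norm f + l2norm g)^2" .
  thus ?thesis
    unfolding l2norm_eq_sqrt_sqnorm[of "\<lambda>q. f q + g q"]
    by (intro real_le_lsqrt add_nonneg_nonneg l2norm_nonneg)
qed

lemma l2_add:
  assumes "f \<in> l2 n" "g \<in> l2 n"
  shows "(\<lambda>q. f q + g q) \<in> l2 n"
  by (rule l2I[where n=n])
     (use assms in \<open>auto simp: l2_vanishes intro!: sqmod_add_summable
        l2_sqmod_summable[OF assms(1)] l2_sqmod_summable[OF assms(2)]\<close>)

lemma l2_scale:
  assumes "f \<in> l2 n"
  shows "(\<lambda>q. c * f q) \<in> l2 n"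
  by (rule l2I[where n=n])
     (use assms in \<open>auto simp: l2_vanishes sqmod_scale intro!: summable_on_cmult_right l2_sqmod_summable[OF assms]\<close>)

lemma l2_scale_iff: "c \<noteq> 0 \<Longrightarrow> (\<lambda>q. c * g q) \<in> l2 n \<longleftrightarrow> g \<in> l2 n"
  using l2_scale[of "\<lambda>q. c * g q" n "inverse c"] l2_scale[of g n c]
  by (auto simp: field_simps)

lemma l2_lincomb: "f \<in> l2 n \<Longrightarrow> g \<in> l2 n \<Longrightarrow> (\<lambda>q. f q + c * g q) \<in> l2 n"
  by (intro l2_add l2_scale)

lemma l2_diff: "f \<in> l2 n \<Longrightarrow> g \<in> l2 n \<Longrightarrow> (\<lambda>q. f q - g q) \<in> l2 n"
  using l2_lincomb[of f n g "-1"] by simp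

lemma basis_vec_in_l2_iff: "basis_vec m \<in> l2 n \<longleftrightarrow> m \<in> Nn n"
proof
  assume "m \<in> Nn n"
  thus "basis_vec m \<in> l2 n"
    by (intro l2I) (auto simp: basis_vec_def sqmod_def intro!: finite_nonzero_values_imp_summable_on)
qed (use l2_vanishes[of "basis_vec m" n m] in \<open>auto simp: basis_vec_def\<close>)

lemma inner2_has_sum:
  assumes "sqmod f summable_on UNIV" "sqmod g summable_on UNIV"
  shows "((\<lambda>q. cnj (f q) * g q) has_sum inner2 f g) UNIV"
  unfolding inner2_def
  by (rule has_sum_infsum, rule abs_summable_summable)
     (use cmod_mult_summable[OF assms] in \<open>simp add: norm_mult\<close>)

lemma inner2_zero_left [simp]: "inner2 (\<lambda>q. 0) g = 0"
  by (simp add: inner2_def)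

lemma inner2_Cauchy_Schwarz:
  assumes f: "sqmod f summable_on UNIV" and g: "sqmod g summable_on UNIV"
  shows "cmod (inner2 f g) \<le> l2norm f * l2norm g"
proof -
  have "cmod (inner2 f g) \<le> infsum (\<lambda>q. norm (cnj (f q) * g q)) UNIV"
    unfolding inner2_def
    by (rule norm_infsum_bound) (use cmod_mult_summable[OF f g] in \<open>simp add: norm_mult\<close>)
  also have "\<dots> \<le> l2norm f * l2norm g" using Cauchy_Schwarz_cmod[OF f g] by (simp add: norm_mult)
  finally show ?thesis .
qed

lemma inner2_lincomb_right:
  assumes "sqmod f summable_on UNIV" "sqmod g summable_on UNIV" "sqmod h summable_on UNIV"
  shows "inner2 f (\<lambda>q. g q + c * h q) = inner2 f g + c * inner2 f h"
proof -
  have "((\<lambda>q. cnj (f q) * g q + c * (cnj (f q) * h q)) has_sum (inner2 f g + c * inner2 f h)) UNIV"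
    by (intro has_sum_add has_sum_cmult_right inner2_has_sum assms)
  thus ?thesis unfolding inner2_def by (intro infsumI) (simp add: algebra_simps)
qed

lemma inner2_lincomb_left:
  assumes "sqmod f summable_on UNIV" "sqmod g summable_on UNIV" "sqmod h summable_on UNIV"
  shows "inner2 (\<lambda>q. g q + c * h q) f = inner2 g f + cnj c * inner2 h f"
proof -
  have "((\<lambda>q. cnj (g q) * f q + cnj c * (cnj (h q) * f q)) has_sum (inner2 g f + cnj c * inner2 h f)) UNIV"
    by (intro has_sum_add has_sum_cmult_right inner2_has_sum assms)
  thus ?thesis unfolding inner2_def by (intro infsumI) (simp add: algebra_simps)
qed

lemma inner2_self:
  assumes "sqmod f summable_on UNIV"
  shows "inner2 f f = complex_of_real (sqnorm f)"
proof -
  have "inner2 f f = infsum (\<lambda>q. complex_of_real (sqmod f q)) UNIV"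
    unfolding inner2_def sqmod_def
    by (rule infsum_cong) (metis complex_norm_square mult.commute of_real_power)
  also have "\<dots> = complex_of_real (sqnorm f)"
    unfolding sqnorm_def by (intro infsumI has_sum_of_real has_sum_infsum assms)
  finally show ?thesis .
qed

lemma inner2_basis_vec: "inner2 (basis_vec m) h = h m"
proof -
  have "inner2 (basis_vec m) h = infsum (\<lambda>q. cnj (basis_vec m q) * h q) {m}"
    unfolding inner2_def by (rule infsum_cong_neutral) (auto simp: basis_vec_def)
  thus ?thesis by (simp add: basis_vec_def)
qed

lemma l2_eq_if_inner2_eq:
  assumes "h1 \<in> l2 n" "h2 \<in> l2 n" "\<And>f. f \<in> l2 n \<Longrightarrow> inner2 f h1 = inner2 f h2"
  shows "h1 = h2"
proof (rule l2_eqI[OF assms(1,2)])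
  fix m assume "m \<in> Nn n"
  thus "h1 m = h2 m" using assms(3)[of "basis_vec m"] by (simp add: basis_vec_in_l2_iff inner2_basis_vec)
qed

section \<open>Bounded operators and their adjoints\<close>

lemma bopI:
  assumes "\<And>f. f \<in> l2 n \<Longrightarrow> T f \<in> l2 n"
    and "\<And>f g c. f \<in> l2 n \<Longrightarrow> g \<in> l2 n \<Longrightarrow> T (\<lambda>q. f q + c * g q) = (\<lambda>q. T f q + c * T g q)"
    and "\<And>f. f \<in> l2 n \<Longrightarrow> l2norm (T f) \<le> C * l2norm f"
    and "\<And>f. f \<notin> l2 n \<Longrightarrow> T f = (\<lambda>q. 0)"
  shows "bop n T"
  unfolding bop_def using assms by blast

lemma bop_maps_l2: "bop n T \<Longrightarrow> f \<in> l2 n \<Longrightarrow> T f \<in> l2 n"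
  by (simp add: bop_def)

lemma bop_lincomb:
  "bop n T \<Longrightarrow> f \<in> l2 n \<Longrightarrow> g \<in> l2 n \<Longrightarrow> T (\<lambda>q. f q + c * g q) = (\<lambda>q. T f q + c * T g q)"
  by (simp add: bop_def)

lemma bop_outside: "bop n T \<Longrightarrow> f \<notin> l2 n \<Longrightarrow> T f = (\<lambda>q. 0)"
  by (simp add: bop_def)

lemma bop_boundE:
  assumes "bop n T"
  obtains C where "C \<ge> 0" "\<And>f. f \<in> l2 n \<Longrightarrow> l2norm (T f) \<le> C * l2norm f"
proof -
  obtain C where C: "\<forall>f\<in>l2 n. l2norm (T f) \<le> C * l2norm f" using assms by (auto simp: bop_def)
  have "l2norm (T f) \<le> max C 0 * l2norm f" if "f \<in> l2 n" for f
    using C that mult_right_mono[of C "max C 0" "l2norm f"] l2norm_nonneg[of f] by fastforce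
  thus ?thesis using that[of "max C 0"] by simp
qed

lemma bop_zero: "bop n T \<Longrightarrow> T (\<lambda>q. 0) = (\<lambda>q. 0)"
  using bop_lincomb[of n T "\<lambda>q. 0" "\<lambda>q. 0" 1] by (simp add: fun_eq_iff)

lemma bop_scale:
  assumes "bop n T"
  shows "T (\<lambda>q. c * g q) = (\<lambda>q. c * T g q)"
proof (cases "g \<in> l2 n")
  case True
  thus ?thesis using bop_lincomb[OF assms zero_in_l2 True, of c] by (simp add: bop_zero[OF assms])
next
  case False
  thus ?thesis
    using l2_scale_iff[of c g n] bop_outside[OF assms] by (cases "c = 0") (auto simp: bop_zero[OF assms])
qed

lemma bop_diff:
  "bop n T \<Longrightarrow> f \<in> l2 n \<Longrightarrow> g \<in> l2 n \<Longrightarrow> T (\<lambda>q. f q - g q) = (\<lambda>q. T f q - T g q)"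
  using bop_lincomb[of n T f g "-1"] by simp

definition adj_coeffs :: "op \<Rightarrow> vec \<Rightarrow> vec" where
  "adj_coeffs T g = (\<lambda>m. inner2 (T (basis_vec m)) g)"

lemma inner2_truncate_vec:
  assumes T: "bop n T" and F: "finite F" "F \<subseteq> Nn n" and g: "g \<in> l2 n"
  shows "truncate_vec F a \<in> l2 n \<and>
         inner2 (T (truncate_vec F a)) g = (\<Sum>m\<in>F. cnj (a m) * adj_coeffs T g m)"
  using F
proof (induction F rule: finite_induct)
  case empty
  thus ?case by (simp add: truncate_vec_def bop_zero[OF T])
next
  case (insert x F)
  define w where "w = truncate_vec F a"
  have w: "w \<in> l2 n" "inner2 (T w) g = (\<Sum>m\<in>F. cnj (a m) * adj_coeffs T g m)"
    using insert w_def by auto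
  have x: "basis_vec x \<in> l2 n" using insert by (simp add: basis_vec_in_l2_iff)
  have split: "truncate_vec (insert x F) a = (\<lambda>q. w q + a x * basis_vec x q)"
    using insert by (auto simp: w_def truncate_vec_def basis_vec_def)
  have "inner2 (T (\<lambda>q. w q + a x * basis_vec x q)) g
      = inner2 (T w) g + cnj (a x) * inner2 (T (basis_vec x)) g"
    unfolding bop_lincomb[OF T w(1) x]
    by (rule inner2_lincomb_left) (auto intro!: l2_sqmod_summable bop_maps_l2[OF T] w x g)
  thus ?case unfolding split using w x insert by (auto intro: l2_lincomb simp: adj_coeffs_def)
qed

lemma le_square_if_le_mult_sqrt:
  fixes S K :: real
  assumes "0 \<le> K" "S \<le> K * sqrt S"
  shows "S \<le> K^2"
proof (cases "S \<le> 0")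
  case True
  thus ?thesis using zero_le_power2[of K] by linarith
next
  case False
  hence "sqrt S * sqrt S \<le> K * sqrt S" using assms by simp
  hence "sqrt S \<le> K" using False mult_right_le_imp_le[of "sqrt S" "sqrt S" K] by simp
  hence "(sqrt S)^2 \<le> K^2" using False by (intro power_mono) auto
  thus ?thesis using False by simp
qed

lemma sum_sqmod_adj_coeffs_le:
  assumes T: "bop n T" and C: "C \<ge> 0" "\<And>f. f \<in> l2 n \<Longrightarrow> l2norm (T f) \<le> C * l2norm f"
    and g: "g \<in> l2 n" and G: "finite G" "G \<subseteq> Nn n"
  shows "sum (sqmod (adj_coeffs T g)) G \<le> (C * l2norm g)^2"
proof -
  let ?h = "adj_coeffs T g"
  define w where "w = truncate_vec G ?h"
  have w: "w \<in> l2 n" using inner2_truncate_vec[OF T G g] by (simp add: w_def)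
  have "inner2 (T w) g = (\<Sum>m\<in>G. cnj (?h m) * ?h m)"
    using inner2_truncate_vec[OF T G g] by (simp add: w_def)
  also have "\<dots> = complex_of_real (sum (sqmod ?h) G)"
    unfolding sqmod_def of_real_sum
    by (intro sum.cong refl) (metis complex_norm_square mult.commute of_real_power)
  finally have "inner2 (T w) g = complex_of_real (sum (sqmod ?h) G)" .
  hence "sum (sqmod ?h) G = cmod (inner2 (T w) g)"
    by (simp only: norm_of_real) (simp add: sum_nonneg)
  also have "\<dots> \<le> l2norm (T w) * l2norm g"
    by (rule inner2_Cauchy_Schwarz) (auto intro!: l2_sqmod_summable bop_maps_l2[OF T] w g)
  also have "\<dots> \<le> C * l2norm w * l2norm g"
    by (rule mult_right_mono) (auto intro: C w simp: l2norm_nonneg)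
  also have "\<dots> = (C * l2norm g) * sqrt (sum (sqmod ?h) G)"
    using sqmod_truncate_vec_has_sum[OF G(1), of ?h]
    by (simp add: w_def l2norm_eq_sqrt_sqnorm sqnorm_def infsumI)
  finally show ?thesis by (intro le_square_if_le_mult_sqrt) (auto simp: C l2norm_nonneg)
qed

lemma adj_coeffs_in_l2:
  assumes T: "bop n T" and g: "g \<in> l2 n"
  shows "adj_coeffs T g \<in> l2 n"
proof -
  obtain C where C: "C \<ge> 0" "\<And>f. f \<in> l2 n \<Longrightarrow> l2norm (T f) \<le> C * l2norm f"
    using bop_boundE[OF T] by blast
  let ?h = "adj_coeffs T g"
  have vanish: "?h m = 0" if "m \<notin> Nn n" for m
    using that basis_vec_in_l2_iff bop_outside[OF T] by (simp add: adj_coeffs_def)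
  have "sum (sqmod ?h) F \<le> (C * l2norm g)^2" if "finite F" for F
    using that sum.mono_neutral_right[of F "F \<inter> Nn n" "sqmod ?h"]
      sum_sqmod_adj_coeffs_le[OF T C g, of "F \<inter> Nn n"]
    by (auto simp: sqmod_def vanish)
  hence "sqmod ?h summable_on UNIV"
    by (intro nonneg_bdd_above_summable_on bdd_aboveI2) auto
  thus ?thesis by (intro l2I vanish)
qed

lemma sqnorm_diff_truncate_vec:
  assumes f: "sqmod f summable_on UNIV" and G: "finite G"
  shows "sqnorm (\<lambda>q. f q - truncate_vec G f q) = sqnorm f - sum (sqmod f) G"
proof -
  have "((\<lambda>q. sqmod f q + - sqmod (truncate_vec G f) q) has_sum (sqnorm f + - sum (sqmod f) G)) UNIV"
    using has_sum_infsum[OF f] sqmod_truncate_vec_has_sum[OF G, of f]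
    by (intro has_sum_add has_sum_uminusI) (simp_all add: sqnorm_def)
  moreover have "(\<lambda>q. sqmod f q + - sqmod (truncate_vec G f) q) = sqmod (\<lambda>q. f q - truncate_vec G f q)"
    by (auto simp: sqmod_def truncate_vec_def)
  ultimately show ?thesis by (simp add: sqnorm_def infsumI)
qed

text \<open>The partial sums of \<langle>f, T* g\<rangle> over finite sets F are \<langle>T f_F, g\<rangle> for the truncations f_F
  of f, and they converge to \<langle>T f, g\<rangle> because T is bounded.\<close>

lemma adj_coeffs_partial_sum_error:
  assumes T: "bop n T" and C: "\<And>f. f \<in> l2 n \<Longrightarrow> l2norm (T f) \<le> C * l2norm f"
    and f: "f \<in> l2 n" and g: "g \<in> l2 n" and F: "finite F"
  shows "cmod ((\<Sum>q\<in>F. cnj (f q) * adj_coeffs T g q) - inner2 (T f) g)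
    \<le> C * l2norm g * sqrt (sqnorm f - sum (sqmod f) F)"
proof -
  let ?s = "\<lambda>F. \<Sum>q\<in>F. cnj (f q) * adj_coeffs T g q"
  define G where "G = F \<inter> Nn n"
  have G: "finite G" "G \<subseteq> Nn n" using F by (auto simp: G_def)
  define w where "w = truncate_vec G f"
  define d where "d = (\<lambda>q. f q - w q)"
  have w: "w \<in> l2 n" and sw: "?s G = inner2 (T w) g"
    using inner2_truncate_vec[OF T G g, of f] by (simp_all add: w_def)
  have d: "d \<in> l2 n" unfolding d_def by (rule l2_diff[OF f w])
  have "sum (sqmod f) G = sum (sqmod f) F"
    using l2_vanishes[OF f] by (intro sum.mono_neutral_left) (auto simp: G_def F sqmod_def)
  hence d_norm: "l2norm d = sqrt (sqnorm f - sum (sqmod f) F)"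
    using sqnorm_diff_truncate_vec[OF l2_sqmod_summable[OF f] G(1)]
    by (simp add: l2norm_eq_sqrt_sqnorm d_def w_def)
  have "?s F = ?s G"
    using l2_vanishes[OF adj_coeffs_in_l2[OF T g]]
    by (intro sum.mono_neutral_right) (auto simp: G_def F)
  also have "\<dots> = inner2 (T f) g - inner2 (T d) g"
    using sw inner2_lincomb_left[of g "T f" "T w" "-1"] l2_sqmod_summable[OF g]
      l2_sqmod_summable[OF bop_maps_l2[OF T f]] l2_sqmod_summable[OF bop_maps_l2[OF T w]]
    by (simp add: d_def bop_diff[OF T f w])
  finally have "cmod (?s F - inner2 (T f) g) = cmod (inner2 (T d) g)"
    by (simp add: norm_minus_commute)
  also have "\<dots> \<le> l2norm (T d) * l2norm g"
    using bop_maps_l2[OF T d] g by (intro inner2_Cauchy_Schwarz l2_sqmod_summable)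
  also have "\<dots> \<le> C * l2norm d * l2norm g"
    by (rule mult_right_mono) (auto intro: C d simp: l2norm_nonneg)
  finally show ?thesis by (simp add: d_norm mult_ac)
qed

lemma inner2_adj_coeffs:
  assumes T: "bop n T" and f: "f \<in> l2 n" and g: "g \<in> l2 n"
  shows "inner2 (T f) g = inner2 f (adj_coeffs T g)"
proof -
  obtain C where C: "\<And>f. f \<in> l2 n \<Longrightarrow> l2norm (T f) \<le> C * l2norm f"
    using bop_boundE[OF T] by blast
  let ?s = "\<lambda>F. \<Sum>q\<in>F. cnj (f q) * adj_coeffs T g q"
  let ?tail = "\<lambda>F. C * l2norm g * sqrt (sqnorm f - sum (sqmod f) F)"
  have sf: "sqmod f summable_on UNIV" by (rule l2_sqmod_summable[OF f])
  have "(sum (sqmod f) \<longlongrightarrow> sqnorm f) (finite_subsets_at_top UNIV)"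
    using has_sum_infsum[OF sf] by (simp add: has_sum_def sqnorm_def)
  hence tail: "(?tail \<longlongrightarrow> C * l2norm g * sqrt (sqnorm f - sqnorm f)) (finite_subsets_at_top UNIV)"
    by (intro tendsto_intros)
  have "\<forall>\<^sub>F F in finite_subsets_at_top UNIV. norm (?s F - inner2 (T f) g) \<le> ?tail F"
    using adj_coeffs_partial_sum_error[OF T C f g] by (intro eventually_finite_subsets_at_top_weakI) simp
  hence "((\<lambda>F. ?s F - inner2 (T f) g) \<longlongrightarrow> 0) (finite_subsets_at_top UNIV)"
    by (rule Lim_null_comparison) (use tail in simp)
  hence "(?s \<longlongrightarrow> inner2 (T f) g) (finite_subsets_at_top UNIV)" by (rule LIM_zero_cancel)
  moreover have "(?s \<longlongrightarrow> inner2 f (adj_coeffs T g)) (finite_subsets_at_top UNIV)"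
    using inner2_has_sum[OF sf l2_sqmod_summable[OF adj_coeffs_in_l2[OF T g]]]
    by (simp add: has_sum_def)
  ultimately show ?thesis using tendsto_unique[OF finite_subsets_at_top_neq_bot] by blast
qed

lemma adj_eqI:
  assumes g: "g \<in> l2 n" and h: "h \<in> l2 n"
    and adjoint: "\<And>f. f \<in> l2 n \<Longrightarrow> inner2 (T f) g = inner2 f h"
  shows "adj n T g = h"
proof -
  have "(THE h. h \<in> l2 n \<and> (\<forall>f\<in>l2 n. inner2 (T f) g = inner2 f h)) = h"
  proof (rule the_equality)
    fix h' assume "h' \<in> l2 n \<and> (\<forall>f\<in>l2 n. inner2 (T f) g = inner2 f h')"
    thus "h' = h" using adjoint by (intro l2_eq_if_inner2_eq[OF _ h]) auto
  qed (use h adjoint in blast)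
  thus ?thesis using g by (simp add: adj_def)
qed

lemma adj_outside: "g \<notin> l2 n \<Longrightarrow> adj n T g = (\<lambda>q. 0)"
  by (simp add: adj_def)

lemma adj_eq_adj_coeffs: "bop n T \<Longrightarrow> g \<in> l2 n \<Longrightarrow> adj n T g = adj_coeffs T g"
  by (intro adj_eqI adj_coeffs_in_l2 inner2_adj_coeffs)

lemma adj_maps_l2: "bop n T \<Longrightarrow> g \<in> l2 n \<Longrightarrow> adj n T g \<in> l2 n"
  by (simp add: adj_eq_adj_coeffs adj_coeffs_in_l2)

lemma inner2_adj: "bop n T \<Longrightarrow> f \<in> l2 n \<Longrightarrow> g \<in> l2 n \<Longrightarrow> inner2 (T f) g = inner2 f (adj n T g)"
  by (simp add: adj_eq_adj_coeffs inner2_adj_coeffs)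

lemma l2norm_adj_le:
  assumes T: "bop n T" and C: "C \<ge> 0" "\<And>f. f \<in> l2 n \<Longrightarrow> l2norm (T f) \<le> C * l2norm f"
    and g: "g \<in> l2 n"
  shows "l2norm (adj n T g) \<le> C * l2norm g"
proof -
  define h where "h = adj n T g"
  have h: "h \<in> l2 n" unfolding h_def by (rule adj_maps_l2[OF T g])
  have "complex_of_real (sqnorm h) = inner2 (T h) g"
    using inner2_self[OF l2_sqmod_summable[OF h]] inner2_adj[OF T h g] by (simp add: h_def)
  hence "sqnorm h = cmod (inner2 (T h) g)"
    using sqnorm_nonneg[of h] by (metis norm_of_real abs_of_nonneg)
  also have "\<dots> \<le> l2norm (T h) * l2norm g"
    by (intro inner2_Cauchy_Schwarz l2_sqmod_summable[OF bop_maps_l2[OF T h]] l2_sqmod_summable[OF g])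
  also have "\<dots> \<le> C * l2norm h * l2norm g"
    by (rule mult_right_mono) (auto intro: C h simp: l2norm_nonneg)
  finally have "sqnorm h \<le> (C * l2norm g) * sqrt (sqnorm h)"
    by (simp add: l2norm_eq_sqrt_sqnorm mult_ac)
  hence "sqnorm h \<le> (C * l2norm g)^2"
    by (rule le_square_if_le_mult_sqrt[rotated]) (simp add: C l2norm_nonneg)
  thus ?thesis
    unfolding h_def[symmetric] l2norm_eq_sqrt_sqnorm[of h]
    by (intro real_le_lsqrt) (simp_all add: C l2norm_nonneg)
qed

lemma adj_lincomb:
  assumes T: "bop n T" and f: "f \<in> l2 n" and g: "g \<in> l2 n"
  shows "adj n T (\<lambda>q. f q + c * g q) = (\<lambda>q. adj n T f q + c * adj n T g q)"
proof -
  have "inner2 (T (basis_vec m)) (\<lambda>q. f q + c * g q)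
      = inner2 (T (basis_vec m)) f + c * inner2 (T (basis_vec m)) g" for m
  proof (cases "m \<in> Nn n")
    case True
    thus ?thesis
      by (intro inner2_lincomb_right l2_sqmod_summable[OF bop_maps_l2[OF T]]
          l2_sqmod_summable[OF f] l2_sqmod_summable[OF g])
         (simp add: basis_vec_in_l2_iff)
  qed (simp add: basis_vec_in_l2_iff bop_outside[OF T])
  thus ?thesis by (simp add: adj_eq_adj_coeffs[OF T] f g l2_lincomb adj_coeffs_def)
qed

lemma bop_adj:
  assumes T: "bop n T"
  shows "bop n (adj n T)"
proof -
  obtain C where C: "C \<ge> 0" "\<And>f. f \<in> l2 n \<Longrightarrow> l2norm (T f) \<le> C * l2norm f"
    using bop_boundE[OF T] by blast
  show ?thesis
    by (intro bopI[where C=C] adj_maps_l2[OF T] adj_lincomb[OF T] l2norm_adj_le[OF T C])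
       (simp_all add: adj_outside)
qed

lemma bop_comp:
  assumes S: "bop n S" and T: "bop n T"
  shows "bop n (S \<circ> T)"
proof -
  obtain C1 where C1: "C1 \<ge> 0" "\<And>f. f \<in> l2 n \<Longrightarrow> l2norm (S f) \<le> C1 * l2norm f"
    using bop_boundE[OF S] by blast
  obtain C2 where C2: "\<And>f. f \<in> l2 n \<Longrightarrow> l2norm (T f) \<le> C2 * l2norm f"
    using bop_boundE[OF T] by blast
  have "l2norm (S (T f)) \<le> (C1 * C2) * l2norm f" if f: "f \<in> l2 n" for f
    using C1(2)[OF bop_maps_l2[OF T f]] mult_left_mono[OF C2[OF f] C1(1)] by (simp add: mult.assoc)
  thus ?thesis
    by (intro bopI[where C="C1 * C2"])
       (auto simp: bop_maps_l2[OF S] bop_maps_l2[OF T] bop_lincomb[OF T] bop_lincomb[OF S]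
         bop_outside[OF T] bop_zero[OF S])
qed

lemma bop_op_add:
  assumes S: "bop n S" and T: "bop n T"
  shows "bop n (op_add S T)"
proof -
  obtain C1 where C1: "\<And>f. f \<in> l2 n \<Longrightarrow> l2norm (S f) \<le> C1 * l2norm f"
    using bop_boundE[OF S] by blast
  obtain C2 where C2: "\<And>f. f \<in> l2 n \<Longrightarrow> l2norm (T f) \<le> C2 * l2norm f"
    using bop_boundE[OF T] by blast
  have "l2norm (op_add S T f) \<le> (C1 + C2) * l2norm f" if f: "f \<in> l2 n" for f
  proof -
    have "l2norm (op_add S T f) \<le> l2norm (S f) + l2norm (T f)"
      unfolding op_add_def
      by (intro l2norm_triangle l2_sqmod_summable[OF bop_maps_l2[OF S f]]
          l2_sqmod_summable[OF bop_maps_l2[OF T f]])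
    thus ?thesis using C1[OF f] C2[OF f] by (simp add: algebra_simps)
  qed
  moreover have "op_add S T f \<in> l2 n" if "f \<in> l2 n" for f
    unfolding op_add_def using that by (intro l2_add bop_maps_l2[OF S] bop_maps_l2[OF T])
  ultimately show ?thesis
    by (intro bopI[where C="C1 + C2"])
       (auto simp: op_add_def bop_lincomb[OF S] bop_lincomb[OF T] bop_outside[OF S] bop_outside[OF T]
         algebra_simps)
qed

lemma bop_op_scale:
  assumes T: "bop n T"
  shows "bop n (op_scale c T)"
proof -
  obtain C where C: "\<And>f. f \<in> l2 n \<Longrightarrow> l2norm (T f) \<le> C * l2norm f"
    using bop_boundE[OF T] by blast
  have "l2norm (op_scale c T f) \<le> (cmod c * C) * l2norm f" if f: "f \<in> l2 n" for f
    unfolding op_scale_def l2norm_scale using C[OF f] by (simp add: mult.assoc mult_left_mono)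
  moreover have "op_scale c T f \<in> l2 n" if "f \<in> l2 n" for f
    unfolding op_scale_def using that by (intro l2_scale bop_maps_l2[OF T])
  ultimately show ?thesis
    by (intro bopI[where C="cmod c * C"])
       (auto simp: op_scale_def bop_lincomb[OF T] bop_outside[OF T] algebra_simps)
qed

lemma op_diff_eq_op_add: "op_diff S T = op_add S (op_scale (-1) T)"
  by (auto simp: op_diff_def op_add_def op_scale_def)

lemma bop_op_diff: "bop n S \<Longrightarrow> bop n T \<Longrightarrow> bop n (op_diff S T)"
  unfolding op_diff_eq_op_add by (intro bop_op_add bop_op_scale)

lemma comp_op_scale_right: "bop n S \<Longrightarrow> S \<circ> op_scale c T = op_scale c (S \<circ> T)"
  by (rule ext) (simp add: op_scale_def bop_scale[of n S c])

lemma comp_op_scale_left: "op_scale c S \<circ> T = op_scale c (S \<circ> T)"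
  by (rule ext) (simp add: op_scale_def)

lemma op_scale_op_scale: "op_scale c (op_scale d T) = op_scale (c * d) T"
  by (rule ext) (simp add: op_scale_def mult.assoc)

lemma l2norm_le_opnorm:
  assumes T: "bop n T" and f: "f \<in> l2 n" "l2norm f \<le> 1"
  shows "l2norm (T f) \<le> opnorm n T"
proof -
  obtain C where C: "C \<ge> 0" "\<And>f. f \<in> l2 n \<Longrightarrow> l2norm (T f) \<le> C * l2norm f"
    using bop_boundE[OF T] by blast
  have "bdd_above {l2norm (T f) | f. f \<in> l2 n \<and> l2norm f \<le> 1}"
    using C mult_left_mono[of _ 1 C] by (intro bdd_aboveI[where M=C]) force
  moreover have "l2norm (T f) \<in> {l2norm (T f) | f. f \<in> l2 n \<and> l2norm f \<le> 1}"
    using f by blast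
  ultimately show ?thesis unfolding opnorm_def by (simp add: cSup_upper)
qed

lemma opnorm_nonneg: "bop n T \<Longrightarrow> 0 \<le> opnorm n T"
  using l2norm_le_opnorm[of n T "\<lambda>q. 0"] by (simp add: bop_zero l2norm_nonneg)

lemma opnorm_le:
  assumes "\<And>f. f \<in> l2 n \<Longrightarrow> l2norm f \<le> 1 \<Longrightarrow> l2norm (T f) \<le> B"
  shows "opnorm n T \<le> B"
  unfolding opnorm_def by (rule cSup_least) (use assms in \<open>auto intro!: exI[of _ "\<lambda>q. 0"]\<close>)

lemma l2norm_apply_le:
  assumes T: "bop n T" and f: "f \<in> l2 n"
  shows "l2norm (T f) \<le> opnorm n T * l2norm f"
proof (cases "l2norm f = 0")
  case True
  hence "f = (\<lambda>q. 0)" using l2norm_eq_0_imp_zero l2_sqmod_summable[OF f] by blast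
  thus ?thesis by (simp add: bop_zero[OF T])
next
  case False
  hence pos: "l2norm f > 0" using l2norm_nonneg[of f] by simp
  define c where "c = complex_of_real (inverse (l2norm f))"
  have cm: "cmod c = inverse (l2norm f)" unfolding c_def norm_of_real using pos by simp
  have "l2norm (\<lambda>q. c * f q) = 1" using pos by (simp add: l2norm_scale cm)
  hence "l2norm (T (\<lambda>q. c * f q)) \<le> opnorm n T" using l2norm_le_opnorm[OF T l2_scale[OF f]] by simp
  hence "inverse (l2norm f) * l2norm (T f) \<le> opnorm n T"
    by (simp add: bop_scale[OF T] l2norm_scale cm)
  thus ?thesis using pos by (simp add: field_simps)
qed

lemma opnorm_scale_le: "bop n T \<Longrightarrow> opnorm n (op_scale c T) \<le> cmod c * opnorm n T"
  by (rule opnorm_le)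
     (simp add: op_scale_def l2norm_scale mult_left_mono l2norm_le_opnorm)

lemma cstar_gen_base: "G \<subseteq> cstar_gen n G"
  unfolding cstar_gen_def by blast

lemma cstar_gen_minimal: "cstar_closed n A \<Longrightarrow> G \<subseteq> A \<Longrightarrow> cstar_gen n G \<subseteq> A"
  unfolding cstar_gen_def by blast

lemma cstar_gen_mono: "G \<subseteq> H \<Longrightarrow> cstar_gen n G \<subseteq> cstar_gen n H"
  unfolding cstar_gen_def by blast

lemma mem_cstar_gen_iff: "T \<in> cstar_gen n G \<longleftrightarrow> (\<forall>A. G \<subseteq> A \<longrightarrow> cstar_closed n A \<longrightarrow> T \<in> A)"
  by (auto simp: cstar_gen_def)

lemma cstar_gen_comp:
  assumes "S \<in> cstar_gen n G" "T \<in> cstar_gen n G"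
  shows "S \<circ> T \<in> cstar_gen n G"
proof (unfold mem_cstar_gen_iff, intro allI impI)
  fix A assume "G \<subseteq> A" "cstar_closed n A"
  thus "S \<circ> T \<in> A" using assms by (auto simp: mem_cstar_gen_iff cstar_closed_def)
qed

lemma cstar_gen_op_scale:
  assumes "T \<in> cstar_gen n G"
  shows "op_scale c T \<in> cstar_gen n G"
proof (unfold mem_cstar_gen_iff, intro allI impI)
  fix A assume "G \<subseteq> A" "cstar_closed n A"
  thus "op_scale c T \<in> A" using assms by (auto simp: mem_cstar_gen_iff cstar_closed_def)
qed

lemma cstar_gen_adj:
  assumes "T \<in> cstar_gen n G"
  shows "adj n T \<in> cstar_gen n G"
proof (unfold mem_cstar_gen_iff, intro allI impI)
  fix A assume "G \<subseteq> A" "cstar_closed n A"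
  thus "adj n T \<in> A" using assms by (auto simp: mem_cstar_gen_iff cstar_closed_def)
qed

section \<open>The dynamics\<close>

definition Ut_phase :: "nat \<Rightarrow> (nat \<Rightarrow> real) \<Rightarrow> real \<Rightarrow> idx \<Rightarrow> complex" where
  "Ut_phase n r t q = exp (\<i> * complex_of_real (t * pair_r n q r))"

lemma norm_Ut_phase [simp]: "cmod (Ut_phase n r t q) = 1"
  by (simp add: Ut_phase_def)

lemma Ut_phase_mult_uminus [simp]: "Ut_phase n r t q * Ut_phase n r (-t) q = 1"
  by (simp add: Ut_phase_def exp_add[symmetric] algebra_simps)

lemma cnj_Ut_phase: "cnj (Ut_phase n r t q) = Ut_phase n r (-t) q"
  by (simp add: Ut_phase_def exp_cnj)

lemma Ut_apply: "f \<in> l2 n \<Longrightarrow> Ut n r t f = (\<lambda>q. Ut_phase n r t q * f q)"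
  by (simp add: Ut_def Ut_phase_def)

lemma Ut_outside: "f \<notin> l2 n \<Longrightarrow> Ut n r t f = (\<lambda>q. 0)"
  by (simp add: Ut_def)

lemma Ut_maps_l2: "f \<in> l2 n \<Longrightarrow> Ut n r t f \<in> l2 n"
  by (simp add: Ut_apply l2_def norm_mult)

lemma Ut_l2norm: "f \<in> l2 n \<Longrightarrow> l2norm (Ut n r t f) = l2norm f"
  by (simp add: Ut_apply l2norm_def norm_mult)

lemma Ut_Ut_uminus:
  assumes f: "f \<in> l2 n"
  shows "Ut n r t (Ut n r (-t) f) = f"
  using Ut_maps_l2[OF f, of r "-t"]
  by (simp only: Ut_apply[OF f] Ut_apply) (simp add: Ut_apply[OF f] mult.assoc[symmetric])

lemma bop_Ut: "bop n (Ut n r t)"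
proof (rule bopI[where C=1])
  fix f g c assume "f \<in> l2 n" "g \<in> l2 n"
  thus "Ut n r t (\<lambda>q. f q + c * g q) = (\<lambda>q. Ut n r t f q + c * Ut n r t g q)"
    by (simp add: Ut_apply l2_lincomb algebra_simps)
qed (simp_all add: Ut_maps_l2 Ut_l2norm Ut_outside)

lemma inner2_Ut: "u \<in> l2 n \<Longrightarrow> g \<in> l2 n \<Longrightarrow> inner2 u (Ut n r s g) = inner2 (Ut n r (-s) u) g"
  by (simp add: Ut_apply inner2_def cnj_Ut_phase mult.assoc mult.left_commute)

definition Ut_commuting :: "nat \<Rightarrow> (nat \<Rightarrow> real) \<Rightarrow> op \<Rightarrow> bool" where
  "Ut_commuting n r T \<longleftrightarrow> (\<forall>t. \<forall>f\<in>l2 n. Ut n r t (T f) = T (Ut n r t f))"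

definition Ut_commutant :: "nat \<Rightarrow> (nat \<Rightarrow> real) \<Rightarrow> op set" where
  "Ut_commutant n r = {T. bop n T \<and> Ut_commuting n r T}"

lemma Ut_commuting_op_add:
  assumes S: "bop n S" "Ut_commuting n r S" and T: "bop n T" "Ut_commuting n r T"
  shows "Ut_commuting n r (op_add S T)"
  unfolding Ut_commuting_def op_add_def
proof (intro allI ballI)
  fix t f assume f: "f \<in> l2 n"
  have "Ut n r t (\<lambda>q. S f q + 1 * T f q) = (\<lambda>q. Ut n r t (S f) q + 1 * Ut n r t (T f) q)"
    by (rule bop_lincomb[OF bop_Ut bop_maps_l2[OF S(1) f] bop_maps_l2[OF T(1) f]])
  thus "Ut n r t (\<lambda>q. S f q + T f q) = (\<lambda>q. S (Ut n r t f) q + T (Ut n r t f) q)"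
    using S(2) T(2) f by (simp add: Ut_commuting_def)
qed

lemma Ut_commuting_op_scale:
  assumes "Ut_commuting n r T"
  shows "Ut_commuting n r (op_scale c T)"
  using assms by (simp add: Ut_commuting_def op_scale_def bop_scale[OF bop_Ut])

lemma Ut_commuting_comp:
  assumes "bop n T" "Ut_commuting n r S" "Ut_commuting n r T"
  shows "Ut_commuting n r (S \<circ> T)"
  using assms by (simp add: Ut_commuting_def bop_maps_l2)

lemma Ut_commuting_adj:
  assumes T: "bop n T" and comm: "Ut_commuting n r T"
  shows "Ut_commuting n r (adj n T)"
  unfolding Ut_commuting_def
proof (intro allI ballI)
  fix t g assume g: "g \<in> l2 n"
  have h: "adj n T g \<in> l2 n" by (rule adj_maps_l2[OF T g])
  show "Ut n r t (adj n T g) = adj n T (Ut n r t g)"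
  proof (rule adj_eqI[OF Ut_maps_l2[OF g] Ut_maps_l2[OF h], symmetric])
    fix f assume f: "f \<in> l2 n"
    have "inner2 (T f) (Ut n r t g) = inner2 (T (Ut n r (-t) f)) g"
      using comm f by (simp add: inner2_Ut[OF bop_maps_l2[OF T f] g] Ut_commuting_def)
    also have "\<dots> = inner2 f (Ut n r t (adj n T g))"
      by (simp add: inner2_adj[OF T Ut_maps_l2[OF f] g] inner2_Ut[OF f h])
    finally show "inner2 (T f) (Ut n r t g) = inner2 f (Ut n r t (adj n T g))" .
  qed
qed

text \<open>Pointwise, |(U_t T f - T U_t f)(m)| \<le> 2 \<parallel>X_j - T\<parallel> \<parallel>f\<parallel> for every approximant X_j
  from the commutant.\<close>

lemma Ut_commuting_limit:
  assumes X: "\<And>j. X j \<in> Ut_commutant n r" and T: "bop n T"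
    and lim: "(\<lambda>j. opnorm n (op_diff (X j) T)) \<longlonglongrightarrow> 0"
  shows "Ut_commuting n r T"
  unfolding Ut_commuting_def
proof (intro allI ballI ext)
  fix t f m assume f: "f \<in> l2 n"
  let ?g = "Ut n r t f"
  have g: "?g \<in> l2 n" by (rule Ut_maps_l2[OF f])
  define D where "D j = op_diff (X j) T" for j
  have D: "bop n (D j)" for j using X[of j] T by (auto simp: D_def Ut_commutant_def intro: bop_op_diff)
  have "cmod (Ut n r t (T f) m - T ?g m) \<le> opnorm n (D j) * (2 * l2norm f)" for j
  proof -
    have Xj: "bop n (X j)" "Ut n r t (X j f) = X j ?g"
      using X[of j] f by (auto simp: Ut_commutant_def Ut_commuting_def)
    have "Ut n r t (T f) m - T ?g m = - (Ut_phase n r t m * D j f m) + D j ?g m"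
      using fun_cong[OF Xj(2), of m]
      by (simp add: Ut_apply bop_maps_l2[OF T f] bop_maps_l2[OF Xj(1) f] D_def op_diff_def algebra_simps)
    hence "cmod (Ut n r t (T f) m - T ?g m) \<le> cmod (D j f m) + cmod (D j ?g m)"
      by (metis norm_triangle_ineq norm_minus_cancel norm_mult norm_Ut_phase mult_1)
    also have "\<dots> \<le> l2norm (D j f) + l2norm (D j ?g)"
      by (intro add_mono cmod_le_l2norm l2_sqmod_summable[OF bop_maps_l2[OF D f]]
          l2_sqmod_summable[OF bop_maps_l2[OF D g]])
    also have "\<dots> \<le> opnorm n (D j) * l2norm f + opnorm n (D j) * l2norm ?g"
      by (intro add_mono l2norm_apply_le D f g)
    finally show ?thesis by (simp add: Ut_l2norm f algebra_simps)
  qed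
  moreover have "(\<lambda>j. opnorm n (D j) * (2 * l2norm f)) \<longlonglongrightarrow> 0 * (2 * l2norm f)"
    by (intro tendsto_mult tendsto_const) (use lim in \<open>simp add: D_def\<close>)
  ultimately have "cmod (Ut n r t (T f) m - T ?g m) \<le> 0 * (2 * l2norm f)"
    by (intro LIMSEQ_le_const) auto
  thus "Ut n r t (T f) m = T ?g m" by simp
qed

lemma cstar_closed_Ut_commutant: "cstar_closed n (Ut_commutant n r)"
  unfolding cstar_closed_def Ut_commutant_def
  by (auto intro: Ut_commuting_op_add Ut_commuting_op_scale Ut_commuting_comp Ut_commuting_adj
      bop_op_add bop_op_scale bop_comp bop_adj Ut_commuting_limit[unfolded Ut_commutant_def])

section \<open>The twisted isometries\<close>

lemma Lop_apply:
  "f \<in> l2 n \<Longrightarrow> Lop n \<Theta> p f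
     = (\<lambda>m. if \<forall>i. p i \<le> m i then sigma n \<Theta> p (\<lambda>i. m i - p i) * f (\<lambda>i. m i - p i) else 0)"
  by (simp add: Lop_def)

lemma Lop_outside: "f \<notin> l2 n \<Longrightarrow> Lop n \<Theta> p f = (\<lambda>m. 0)"
  by (simp add: Lop_def)

lemma norm_sigma [simp]: "cmod (sigma n \<Theta> x y) = 1"
  by (simp add: sigma_def norm_exp_eq_Re)

lemma cnj_sigma_mult_sigma [simp]: "cnj (sigma n \<Theta> x y) * sigma n \<Theta> x y = 1"
  by (simp add: sigma_def exp_cnj exp_add[symmetric])

lemma Nn_add: "x \<in> Nn n \<Longrightarrow> y \<in> Nn n \<Longrightarrow> (\<lambda>i. x i + y i) \<in> Nn n"
  by (simp add: Nn_def)

definition shift_idx :: "idx \<Rightarrow> idx \<Rightarrow> idx" where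
  "shift_idx p u = (\<lambda>i. u i + p i)"

lemma inj_shift_idx: "inj (shift_idx p)"
  by (auto simp: inj_def shift_idx_def fun_eq_iff)

lemma range_shift_idx: "range (shift_idx p) = {m. \<forall>i. p i \<le> m i}"
proof (intro set_eqI iffI)
  fix m assume "m \<in> {m. \<forall>i. p i \<le> m i}"
  hence "m = shift_idx p (\<lambda>i. m i - p i)" by (auto simp: shift_idx_def)
  thus "m \<in> range (shift_idx p)" by blast
qed (auto simp: shift_idx_def)

lemma Lop_sqmod_has_sum:
  assumes f: "f \<in> l2 n"
  shows "(sqmod (Lop n \<Theta> p f) has_sum sqnorm f) UNIV"
proof -
  have "sqmod (Lop n \<Theta> p f) \<circ> shift_idx p = sqmod f"
    by (auto simp: sqmod_def Lop_apply[OF f] shift_idx_def norm_mult)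
  hence "(sqmod (Lop n \<Theta> p f) has_sum sqnorm f) (range (shift_idx p))"
    using has_sum_infsum[OF l2_sqmod_summable[OF f]]
    by (simp add: has_sum_reindex[OF inj_shift_idx] sqnorm_def)
  thus ?thesis
    by (subst has_sum_cong_neutral[where T="range (shift_idx p)"])
       (auto simp: range_shift_idx sqmod_def Lop_apply[OF f])
qed

lemma Lop_maps_l2:
  assumes p: "p \<in> Nn n" and f: "f \<in> l2 n"
  shows "Lop n \<Theta> p f \<in> l2 n"
proof (rule l2I)
  show "sqmod (Lop n \<Theta> p f) summable_on UNIV"
    using Lop_sqmod_has_sum[OF f] by (rule has_sum_imp_summable)
  fix m assume "m \<notin> Nn n"
  then obtain i where "i \<ge> n" "m i \<noteq> 0" by (auto simp: Nn_def)
  hence "(\<lambda>i. m i - p i) \<notin> Nn n" using p by (auto simp: Nn_def)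
  thus "Lop n \<Theta> p f m = 0" by (simp add: Lop_apply[OF f] l2_vanishes[OF f])
qed

lemma Lop_l2norm: "f \<in> l2 n \<Longrightarrow> l2norm (Lop n \<Theta> p f) = l2norm f"
  using Lop_sqmod_has_sum by (simp add: l2norm_eq_sqrt_sqnorm sqnorm_def infsumI)

lemma bop_Lop:
  assumes p: "p \<in> Nn n"
  shows "bop n (Lop n \<Theta> p)"
proof (rule bopI[where C=1])
  fix f g c assume "f \<in> l2 n" "g \<in> l2 n"
  thus "Lop n \<Theta> p (\<lambda>q. f q + c * g q) = (\<lambda>q. Lop n \<Theta> p f q + c * Lop n \<Theta> p g q)"
    by (simp add: Lop_apply l2_lincomb fun_eq_iff algebra_simps)
qed (simp_all add: Lop_maps_l2 p Lop_l2norm Lop_outside)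

lemma adj_Lop_apply:
  assumes g: "g \<in> l2 n"
  shows "adj n (Lop n \<Theta> q) g = (\<lambda>m. cnj (sigma n \<Theta> q m) * g (\<lambda>i. m i + q i))"
    (is "_ = ?h")
proof (rule adj_eqI[OF g])
  have "(sqmod g \<circ> shift_idx q) summable_on UNIV"
    using summable_on_subset[OF l2_sqmod_summable[OF g]]
    by (simp add: summable_on_reindex[OF inj_shift_idx, symmetric])
  moreover have "sqmod g \<circ> shift_idx q = sqmod ?h"
    by (auto simp: sqmod_def shift_idx_def norm_mult)
  moreover have "(\<lambda>i. m i + q i) \<notin> Nn n" if "m \<notin> Nn n" for m
    using that by (auto simp: Nn_def)
  ultimately show "?h \<in> l2 n" by (intro l2I) (auto simp: l2_vanishes[OF g])
  fix f assume f: "f \<in> l2 n"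
  have "inner2 (Lop n \<Theta> q f) g = infsum (\<lambda>m. cnj (Lop n \<Theta> q f m) * g m) (range (shift_idx q))"
    unfolding inner2_def by (rule infsum_cong_neutral) (auto simp: range_shift_idx Lop_apply[OF f])
  also have "\<dots> = infsum ((\<lambda>m. cnj (Lop n \<Theta> q f m) * g m) \<circ> shift_idx q) UNIV"
    by (rule infsum_reindex[OF inj_shift_idx])
  also have "\<dots> = inner2 f ?h"
    unfolding inner2_def by (rule infsum_cong) (simp add: Lop_apply[OF f] shift_idx_def)
  finally show "inner2 (Lop n \<Theta> q f) g = inner2 f ?h" .
qed

lemma bop_adj_Lop: "q \<in> Nn n \<Longrightarrow> bop n (adj n (Lop n \<Theta> q))"
  by (intro bop_adj bop_Lop)

definition dyn_eigen :: "nat \<Rightarrow> (nat \<Rightarrow> real) \<Rightarrow> real \<Rightarrow> op \<Rightarrow> bool" where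
  "dyn_eigen n r c T \<longleftrightarrow> (\<forall>t. dyn n r t T = op_scale (exp (\<i> * complex_of_real (t * c))) T)"

lemma dyn_eigenI:
  assumes T: "bop n T"
    and Ut_T: "\<And>t f. f \<in> l2 n \<Longrightarrow> Ut n r t (T f) = (\<lambda>m. exp (\<i> * complex_of_real (t * c)) * T (Ut n r t f) m)"
  shows "dyn_eigen n r c T"
  unfolding dyn_eigen_def
proof (intro allI, rule ext)
  fix t f
  show "dyn n r t T f = op_scale (exp (\<i> * complex_of_real (t * c))) T f"
  proof (cases "f \<in> l2 n")
    case True
    thus ?thesis using Ut_T[OF Ut_maps_l2[OF True], of t]
      by (simp add: dyn_def op_scale_def Ut_Ut_uminus)
  next
    case False
    thus ?thesis
      by (simp add: dyn_def op_scale_def Ut_outside bop_outside[OF T] bop_zero[OF T] Ut_apply)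
  qed
qed

lemma dyn_eigen_if_Ut_commuting: "bop n T \<Longrightarrow> Ut_commuting n r T \<Longrightarrow> dyn_eigen n r 0 T"
  by (intro dyn_eigenI) (simp_all add: Ut_commuting_def)

lemma pair_r_add: "pair_r n (\<lambda>i. m i + q i) r = pair_r n m r + pair_r n q r"
  by (simp add: pair_r_def sum.distrib algebra_simps)

lemma pair_r_diff: "\<forall>i. p i \<le> m i \<Longrightarrow> pair_r n (\<lambda>i. m i - p i) r = pair_r n m r - pair_r n p r"
  by (simp add: pair_r_def sum_subtractf[symmetric] of_nat_diff algebra_simps)

lemma Ut_Lop:
  assumes p: "p \<in> Nn n" and f: "f \<in> l2 n"
  shows "Ut n r t (Lop n \<Theta> p f)
    = (\<lambda>m. exp (\<i> * complex_of_real (t * pair_r n p r)) * Lop n \<Theta> p (Ut n r t f) m)"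
proof
  fix m
  show "Ut n r t (Lop n \<Theta> p f) m = exp (\<i> * complex_of_real (t * pair_r n p r)) * Lop n \<Theta> p (Ut n r t f) m"
  proof (cases "\<forall>i. p i \<le> m i")
    case True
    have "Ut_phase n r t m = exp (\<i> * complex_of_real (t * pair_r n p r)) * Ut_phase n r t (\<lambda>i. m i - p i)"
      unfolding Ut_phase_def pair_r_diff[OF True] exp_add[symmetric] by (simp add: algebra_simps)
    thus ?thesis
      using True unfolding Ut_apply[OF Lop_maps_l2[OF p f]] Lop_apply[OF Ut_maps_l2[OF f]]
      by (simp add: Lop_apply[OF f] Ut_apply[OF f])
  next
    case False
    thus ?thesis
      unfolding Ut_apply[OF Lop_maps_l2[OF p f]] Lop_apply[OF Ut_maps_l2[OF f]]
      by (simp add: Lop_apply[OF f] if_not_P[OF False])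
  qed
qed

lemma dyn_eigen_Lop: "p \<in> Nn n \<Longrightarrow> dyn_eigen n r (pair_r n p r) (Lop n \<Theta> p)"
  by (intro dyn_eigenI bop_Lop Ut_Lop)

lemma dyn_eigen_adj_Lop:
  assumes q: "q \<in> Nn n"
  shows "dyn_eigen n r (- pair_r n q r) (adj n (Lop n \<Theta> q))"
proof (intro dyn_eigenI bop_adj_Lop q ext)
  fix t g m assume g: "g \<in> l2 n"
  have "Ut_phase n r t m = exp (\<i> * complex_of_real (t * - pair_r n q r)) * Ut_phase n r t (\<lambda>i. m i + q i)"
    unfolding Ut_phase_def pair_r_add exp_add[symmetric] by (simp add: algebra_simps)
  thus "Ut n r t (adj n (Lop n \<Theta> q) g) m
      = exp (\<i> * complex_of_real (t * - pair_r n q r)) * adj n (Lop n \<Theta> q) (Ut n r t g) m"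
    unfolding Ut_apply[OF adj_maps_l2[OF bop_Lop[OF q] g]] adj_Lop_apply[OF Ut_maps_l2[OF g]]
    by (simp add: adj_Lop_apply[OF g] Ut_apply[OF g])
qed

lemma sigma_eq_cis: "sigma n \<Theta> x y = cis (- (pi * pair_Theta n \<Theta> x y))"
  by (simp add: sigma_def cis_conv_exp algebra_simps)

lemma cnj_sigma_eq_cis: "cnj (sigma n \<Theta> x y) = cis (pi * pair_Theta n \<Theta> x y)"
  by (simp add: sigma_eq_cis cis_cnj)

lemma pair_Theta_add_left:
  "pair_Theta n \<Theta> (\<lambda>i. x i + y i) z = pair_Theta n \<Theta> x z + pair_Theta n \<Theta> y z"
  by (simp add: pair_Theta_def sum.distrib[symmetric] algebra_simps)

lemma pair_Theta_add_right:
  "pair_Theta n \<Theta> z (\<lambda>i. x i + y i) = pair_Theta n \<Theta> z x + pair_Theta n \<Theta> z y"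
  by (simp add: pair_Theta_def sum.distrib[symmetric] algebra_simps)

lemma Lop_comp_Lop:
  assumes u: "u \<in> Nn n" and v: "v \<in> Nn n"
  shows "Lop n \<Theta> u \<circ> Lop n \<Theta> v = op_scale (sigma n \<Theta> u v) (Lop n \<Theta> (\<lambda>i. u i + v i))"
proof (intro ext)
  fix f m
  show "(Lop n \<Theta> u \<circ> Lop n \<Theta> v) f m = op_scale (sigma n \<Theta> u v) (Lop n \<Theta> (\<lambda>i. u i + v i)) f m"
  proof (cases "f \<in> l2 n")
    case False
    thus ?thesis by (simp add: Lop_outside op_scale_def bop_zero[OF bop_Lop[OF u]])
  next
    case f: True
    have uv: "(Lop n \<Theta> u \<circ> Lop n \<Theta> v) f m
      = (if \<forall>i. u i \<le> m i then sigma n \<Theta> u (\<lambda>i. m i - u i) * Lop n \<Theta> v f (\<lambda>i. m i - u i) else 0)"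
      by (simp only: comp_apply Lop_apply[OF Lop_maps_l2[OF v f]])
    show ?thesis
    proof (cases "\<forall>i. u i + v i \<le> m i")
      case True
      define w where "w = (\<lambda>i. m i - (u i + v i))"
      have "(\<lambda>i. m i - u i) = (\<lambda>i. w i + v i)" "(\<lambda>i. w i + v i - v i) = w"
        using True by (auto simp: w_def fun_eq_iff)
      moreover have "\<forall>i. u i \<le> m i" using True by (meson add_leD1)
      moreover have "sigma n \<Theta> u (\<lambda>i. w i + v i) * sigma n \<Theta> v w
          = sigma n \<Theta> u v * sigma n \<Theta> (\<lambda>i. u i + v i) w"
        by (simp add: sigma_eq_cis cis_mult pair_Theta_add_left pair_Theta_add_right algebra_simps)
      ultimately show ?thesis
        using True unfolding uv
        by (simp add: op_scale_def Lop_apply[OF f] w_def[symmetric] mult.assoc[symmetric])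
    next
      case False
      hence "\<not> ((\<forall>i. u i \<le> m i) \<and> (\<forall>i. v i \<le> m i - u i))"
        by (auto simp: le_diff_conv2 add.commute)
      thus ?thesis using False unfolding uv by (auto simp: op_scale_def Lop_apply[OF f])
    qed
  qed
qed

lemma adj_Lop_comp_adj_Lop:
  assumes u: "u \<in> Nn n" and v: "v \<in> Nn n"
  shows "adj n (Lop n \<Theta> u) \<circ> adj n (Lop n \<Theta> v)
    = op_scale (cnj (sigma n \<Theta> v u)) (adj n (Lop n \<Theta> (\<lambda>i. v i + u i)))"
proof (intro ext)
  fix g m
  show "(adj n (Lop n \<Theta> u) \<circ> adj n (Lop n \<Theta> v)) g m
    = op_scale (cnj (sigma n \<Theta> v u)) (adj n (Lop n \<Theta> (\<lambda>i. v i + u i))) g m"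
  proof (cases "g \<in> l2 n")
    case False
    thus ?thesis by (simp add: adj_outside op_scale_def bop_zero[OF bop_adj_Lop[OF u]])
  next
    case g: True
    have "cnj (sigma n \<Theta> u m) * cnj (sigma n \<Theta> v (\<lambda>i. m i + u i))
        = cnj (sigma n \<Theta> v u) * cnj (sigma n \<Theta> (\<lambda>i. v i + u i) m)"
      by (simp add: cnj_sigma_eq_cis cis_mult pair_Theta_add_left pair_Theta_add_right algebra_simps)
    moreover have "(\<lambda>i. m i + u i + v i) = (\<lambda>i. m i + (v i + u i))" by (simp add: algebra_simps)
    ultimately show ?thesis
      using adj_maps_l2[OF bop_Lop[OF v] g]
      by (simp add: adj_Lop_apply g op_scale_def mult.assoc[symmetric])
  qed
qed

definition id_l2 :: "nat \<Rightarrow> op" where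
  "id_l2 n = (\<lambda>f. if f \<in> l2 n then f else (\<lambda>q. 0))"

lemma comp_id_l2: "bop n T \<Longrightarrow> T \<circ> id_l2 n = T"
  by (rule ext) (simp add: id_l2_def bop_outside bop_zero)

lemma adj_Lop_comp_Lop_self:
  assumes p: "p \<in> Nn n"
  shows "adj n (Lop n \<Theta> p) \<circ> Lop n \<Theta> p = id_l2 n"
proof (intro ext)
  fix f u
  have "(\<lambda>i. u i + p i - p i) = u" by simp
  thus "(adj n (Lop n \<Theta> p) \<circ> Lop n \<Theta> p) f u = id_l2 n f u"
    using Lop_maps_l2[OF p]
    by (cases "f \<in> l2 n")
       (simp_all add: id_l2_def adj_Lop_apply Lop_apply Lop_outside bop_zero[OF bop_adj_Lop[OF p]]
         mult.assoc[symmetric])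
qed

text \<open>Disjointness of the supports is essential: L_a* L_a = 1, whereas L_a L_a* is a proper
  projection for a \<noteq> 0.\<close>

lemma adj_Lop_comp_Lop:
  assumes a: "a \<in> Nn n" and b: "b \<in> Nn n" and c: "c \<in> Nn n"
    and disj: "\<forall>i. a i = 0 \<or> b i = 0"
  shows "adj n (Lop n \<Theta> (\<lambda>i. b i + c i)) \<circ> Lop n \<Theta> (\<lambda>i. a i + c i)
    = op_scale (cis (pi * (pair_Theta n \<Theta> c a - pair_Theta n \<Theta> c b - pair_Theta n \<Theta> a b + pair_Theta n \<Theta> b a)))
        (Lop n \<Theta> a \<circ> adj n (Lop n \<Theta> b))"
    (is "adj n (Lop n \<Theta> ?q) \<circ> Lop n \<Theta> ?p = op_scale ?w _")
proof (intro ext)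
  have p: "?p \<in> Nn n" and q: "?q \<in> Nn n" using Nn_add a b c by blast+
  fix f u
  show "(adj n (Lop n \<Theta> ?q) \<circ> Lop n \<Theta> ?p) f u = op_scale ?w (Lop n \<Theta> a \<circ> adj n (Lop n \<Theta> b)) f u"
  proof (cases "f \<in> l2 n")
    case False
    thus ?thesis
      by (simp add: Lop_outside adj_outside op_scale_def bop_zero[OF bop_adj_Lop[OF q]] bop_zero[OF bop_Lop[OF a]])
  next
    case f: True
    have lhs: "(adj n (Lop n \<Theta> ?q) \<circ> Lop n \<Theta> ?p) f u
        = cnj (sigma n \<Theta> ?q u) * Lop n \<Theta> ?p f (\<lambda>i. u i + ?q i)"
      by (simp only: comp_apply adj_Lop_apply[OF Lop_maps_l2[OF p f]])
    have rhs: "(Lop n \<Theta> a \<circ> adj n (Lop n \<Theta> b)) f u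
        = (if \<forall>i. a i \<le> u i then sigma n \<Theta> a (\<lambda>i. u i - a i) * adj n (Lop n \<Theta> b) f (\<lambda>i. u i - a i) else 0)"
      by (simp only: comp_apply Lop_apply[OF adj_maps_l2[OF bop_Lop[OF b] f]])
    show ?thesis
    proof (cases "\<forall>i. a i \<le> u i")
      case True
      define w where "w = (\<lambda>i. u i - a i)"
      have u: "u = (\<lambda>i. w i + a i)" using True by (auto simp: w_def)
      have "\<forall>i. a i + c i \<le> u i + (b i + c i)" using True by (auto intro: trans_le_add1)
      moreover have "(\<lambda>i. u i + (b i + c i) - (a i + c i)) = (\<lambda>i. w i + b i)"
        using True by (auto simp: w_def)
      moreover have "cnj (sigma n \<Theta> ?q (\<lambda>i. w i + a i)) * sigma n \<Theta> ?p (\<lambda>i. w i + b i)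
          = ?w * (sigma n \<Theta> a w * cnj (sigma n \<Theta> b w))"
        unfolding sigma_eq_cis cis_cnj
        by (simp only: mult.assoc[symmetric] cis_mult, rule arg_cong[where f=cis])
           (simp add: pair_Theta_add_left pair_Theta_add_right algebra_simps)
      ultimately show ?thesis
        unfolding lhs rhs op_scale_def
        by (subst (1 2 3) u) (simp add: True Lop_apply[OF f] adj_Lop_apply[OF f] w_def[symmetric]
            mult.assoc[symmetric])
    next
      case False
      then obtain i where i: "\<not> a i \<le> u i" by blast
      hence "b i = 0" using disj by (metis le0)
      hence "\<not> (\<forall>i. a i + c i \<le> u i + (b i + c i))" using i by (metis add_le_cancel_right add_0)
      thus ?thesis
        by (simp only: lhs rhs op_scale_def Lop_apply[OF f] if_not_P[OF False] if_not_P) simp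
    qed
  qed
qed

definition unimodular_multiple :: "op \<Rightarrow> op \<Rightarrow> bool" where
  "unimodular_multiple S T \<longleftrightarrow> (\<exists>w. cmod w = 1 \<and> S = op_scale w T)"

lemma unimodular_multiple_refl: "unimodular_multiple T T"
  unfolding unimodular_multiple_def by (intro exI[of _ 1]) (simp add: op_scale_def)

lemma unimodular_multiple_op_scale: "cmod w = 1 \<Longrightarrow> unimodular_multiple (op_scale w T) T"
  unfolding unimodular_multiple_def by blast

lemma unimodular_multiple_trans:
  assumes "unimodular_multiple R S" "unimodular_multiple S T"
  shows "unimodular_multiple R T"
proof -
  obtain v w where "cmod v = 1" "R = op_scale v S" "cmod w = 1" "S = op_scale w T"
    using assms unfolding unimodular_multiple_def by blast
  thus ?thesis
    unfolding unimodular_multiple_def by (intro exI[of _ "v * w"]) (simp add: op_scale_op_scale norm_mult)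
qed

lemma unimodular_multiple_comp:
  assumes "unimodular_multiple S S'" "unimodular_multiple T T'" "bop n S'"
  shows "unimodular_multiple (S \<circ> T) (S' \<circ> T')"
proof -
  obtain v w where "cmod v = 1" "S = op_scale v S'" "cmod w = 1" "T = op_scale w T'"
    using assms(1,2) unfolding unimodular_multiple_def by blast
  thus ?thesis
    unfolding unimodular_multiple_def using assms(3)
    by (intro exI[of _ "v * w"])
       (simp add: comp_op_scale_left comp_op_scale_right op_scale_op_scale norm_mult)
qed

lemma unimodular_multiple_Lop_comp_Lop:
  "u \<in> Nn n \<Longrightarrow> v \<in> Nn n \<Longrightarrow>
    unimodular_multiple (Lop n \<Theta> u \<circ> Lop n \<Theta> v) (Lop n \<Theta> (\<lambda>i. u i + v i))"
  by (simp add: Lop_comp_Lop unimodular_multiple_op_scale)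

lemma unimodular_multiple_adj_Lop_comp_adj_Lop:
  assumes "u \<in> Nn n" "v \<in> Nn n"
  shows "unimodular_multiple (adj n (Lop n \<Theta> u) \<circ> adj n (Lop n \<Theta> v)) (adj n (Lop n \<Theta> (\<lambda>i. u i + v i)))"
proof -
  have "(\<lambda>i. v i + u i) = (\<lambda>i. u i + v i)" by (simp add: add.commute)
  thus ?thesis by (simp add: adj_Lop_comp_adj_Lop assms unimodular_multiple_op_scale)
qed

lemma unimodular_multiple_adj_Lop_comp_Lop:
  "a \<in> Nn n \<Longrightarrow> b \<in> Nn n \<Longrightarrow> c \<in> Nn n \<Longrightarrow> \<forall>i. a i = 0 \<or> b i = 0 \<Longrightarrow>
    unimodular_multiple (adj n (Lop n \<Theta> (\<lambda>i. b i + c i)) \<circ> Lop n \<Theta> (\<lambda>i. a i + c i))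
      (Lop n \<Theta> a \<circ> adj n (Lop n \<Theta> b))"
  by (simp add: adj_Lop_comp_Lop unimodular_multiple_op_scale)

lemma unimodular_multiple_adj_Lop_comp_Lop_disjoint:
  assumes "a \<in> Nn n" "b \<in> Nn n" "\<forall>i. a i = 0 \<or> b i = 0"
  shows "unimodular_multiple (adj n (Lop n \<Theta> b) \<circ> Lop n \<Theta> a) (Lop n \<Theta> a \<circ> adj n (Lop n \<Theta> b))"
  using unimodular_multiple_adj_Lop_comp_Lop[OF assms(1,2) _ assms(3), of "\<lambda>i. 0" \<Theta>]
  by (simp add: Nn_def)

lemma unimodular_multiple_Lop_adj_Lop_adj_Lop_Lop:
  assumes a: "a \<in> Nn n" and b: "b \<in> Nn n" and c: "c \<in> Nn n" and x: "x \<in> Nn n" and y: "y \<in> Nn n"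
    and ab: "\<forall>i. a i = 0 \<or> b i = 0" and ay: "\<forall>i. a i = 0 \<or> y i = 0"
  shows "unimodular_multiple
    (Lop n \<Theta> x \<circ> adj n (Lop n \<Theta> y) \<circ> adj n (Lop n \<Theta> (\<lambda>i. b i + c i)) \<circ> Lop n \<Theta> (\<lambda>i. a i + c i))
    (Lop n \<Theta> (\<lambda>i. x i + a i) \<circ> adj n (Lop n \<Theta> (\<lambda>i. y i + b i)))"
proof -
  let ?L = "Lop n \<Theta>" and ?A = "\<lambda>v. adj n (Lop n \<Theta> v)"
  have bops: "bop n (?L x \<circ> ?A y)" "bop n (?L x)" "bop n (?L x \<circ> (?L a \<circ> ?A y))"
    "bop n (?L (\<lambda>i. x i + a i))"
    using bop_Lop bop_adj_Lop bop_comp Nn_add a x y by metis+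
  have s1: "unimodular_multiple (?L x \<circ> ?A y \<circ> ?A (\<lambda>i. b i + c i) \<circ> ?L (\<lambda>i. a i + c i))
      (?L x \<circ> ?A y \<circ> ?L a \<circ> ?A b)"
    using unimodular_multiple_comp[OF unimodular_multiple_refl
        unimodular_multiple_adj_Lop_comp_Lop[OF a b c ab, of \<Theta>] bops(1)]
    by (simp add: comp_assoc)
  have s2: "unimodular_multiple (?L x \<circ> ?A y \<circ> ?L a \<circ> ?A b) (?L x \<circ> ?L a \<circ> ?A y \<circ> ?A b)"
    using unimodular_multiple_comp[OF unimodular_multiple_comp[OF unimodular_multiple_refl
          unimodular_multiple_adj_Lop_comp_Lop_disjoint[OF a y ay, of \<Theta>] bops(2)]
        unimodular_multiple_refl bops(3)]
    by (simp add: comp_assoc)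
  have s3: "unimodular_multiple (?L x \<circ> ?L a \<circ> ?A y \<circ> ?A b)
      (?L (\<lambda>i. x i + a i) \<circ> ?A (\<lambda>i. y i + b i))"
    using unimodular_multiple_comp[OF unimodular_multiple_Lop_comp_Lop[OF x a]
        unimodular_multiple_adj_Lop_comp_adj_Lop[OF y b] bops(4)]
    by (simp add: comp_assoc)
  show ?thesis by (rule unimodular_multiple_trans[OF unimodular_multiple_trans[OF s1 s2] s3])
qed

section \<open>KMS states\<close>

lemma state_op_scale:
  assumes st: "is_state n (cstar_gen n G) \<phi>" and T: "T \<in> cstar_gen n G"
  shows "\<phi> (op_scale c T) = c * \<phi> T"
proof -
  define Z where "Z = op_scale 0 T"
  have Z: "Z \<in> cstar_gen n G" unfolding Z_def by (rule cstar_gen_op_scale[OF T])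
  have lin: "\<phi> (op_add S (op_scale d U)) = \<phi> S + d * \<phi> U"
    if "S \<in> cstar_gen n G" "U \<in> cstar_gen n G" for S U d
    using st that by (simp add: is_state_def)
  have "op_add Z (op_scale 1 Z) = Z" "op_add Z (op_scale c T) = op_scale c T"
    by (auto simp: Z_def op_add_def op_scale_def)
  thus ?thesis using lin[OF Z Z, of 1] lin[OF Z T, of c] by simp
qed

lemma op_entire_exp_op_scale:
  assumes T: "bop n T"
  shows "op_entire n (\<lambda>z. op_scale (exp (\<i> * z * complex_of_real c)) T)"
  unfolding op_entire_def
proof
  fix z
  let ?e = "\<lambda>w. exp (\<i> * w * complex_of_real c)"
  let ?d = "\<i> * complex_of_real c * ?e z"
  define g where "g h = (?e (z + h) - ?e z) / h - ?d" for h
  have "(?e has_field_derivative ?d) (at z)"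
    by (auto intro!: derivative_eq_intros simp: algebra_simps)
  hence "(g \<longlongrightarrow> 0) (at 0)"
    unfolding g_def by (intro LIM_zero DERIV_D)
  hence bound: "((\<lambda>h. cmod (g h) * opnorm n T) \<longlongrightarrow> 0 * opnorm n T) (at 0)"
    by (intro tendsto_mult tendsto_const tendsto_norm_zero)
  have "((\<lambda>h. opnorm n (op_scale (g h) T)) \<longlongrightarrow> 0) (at 0)"
    by (rule tendsto_sandwich[where f="\<lambda>h. 0" and h="\<lambda>h. cmod (g h) * opnorm n T"])
       (use bound opnorm_scale_le[OF T] opnorm_nonneg[OF bop_op_scale[OF T]] in auto)
  moreover have "(\<lambda>f q. (op_scale (?e (z + h)) T f q - op_scale (?e z) T f q) / h - op_scale ?d T f q)
      = op_scale (g h) T" for h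
    by (auto simp: op_scale_def g_def field_simps)
  ultimately show "\<exists>D. bop n D \<and> ((\<lambda>h. opnorm n (\<lambda>f q. (op_scale (?e (z + h)) T f q
      - op_scale (?e z) T f q) / h - D f q)) \<longlongrightarrow> 0) (at 0)"
    using bop_op_scale[OF T] by (intro exI[of _ "op_scale ?d T"]) simp
qed

text \<open>The entire extension of an eigenoperator T of frequency c is z \<mapsto> e^(i z c) T.\<close>

lemma KMS_dyn_eigen:
  assumes KMS: "is_KMS n r (cstar_gen n G) \<beta> \<phi>"
    and T: "T \<in> cstar_gen n G" "bop n T" "dyn_eigen n r c T"
    and B: "B \<in> cstar_gen n G" "bop n B"
  shows "\<phi> (T \<circ> B) = exp (- complex_of_real (\<beta> * c)) * \<phi> (B \<circ> T)"
proof -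
  define F where "F z = op_scale (exp (\<i> * z * complex_of_real c)) T" for z
  have "analytic_ext n r (cstar_gen n G) T F"
    using T cstar_gen_op_scale[OF T(1)] op_entire_exp_op_scale[OF T(2)]
    unfolding analytic_ext_def dyn_eigen_def F_def by (simp add: mult_ac)
  hence "\<phi> (T \<circ> B) = \<phi> (B \<circ> F (\<i> * complex_of_real \<beta>))"
    using KMS B(1) unfolding is_KMS_def by blast
  also have "B \<circ> F (\<i> * complex_of_real \<beta>) = op_scale (exp (- complex_of_real (\<beta> * c))) (B \<circ> T)"
    by (simp add: F_def comp_op_scale_right[OF B(2)])
  also have "\<phi> \<dots> = exp (- complex_of_real (\<beta> * c)) * \<phi> (B \<circ> T)"
    using KMS state_op_scale[OF _ cstar_gen_comp[OF B(1) T(1)]] by (simp add: is_KMS_def)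
  finally show ?thesis .
qed

lemma KMS_trace_on_Ut_commutant:
  assumes KMS: "is_KMS n r (cstar_gen n G) \<beta> \<phi>"
    and S: "S \<in> cstar_gen n G" "S \<in> Ut_commutant n r"
    and T: "T \<in> cstar_gen n G" "T \<in> Ut_commutant n r"
  shows "\<phi> (S \<circ> T) = \<phi> (T \<circ> S)"
  using KMS_dyn_eigen[OF KMS S(1) _ dyn_eigen_if_Ut_commuting T(1)] S(2) T(2)
  by (simp add: Ut_commutant_def)

text \<open>If T B and B T are unimodular multiples of N, the KMS condition equates \<phi>(N), up to a
  unimodular factor, with e^(-\<beta> c) \<phi>(N).\<close>

lemma KMS_vanishes_on_unimodular_multiple:
  assumes KMS: "is_KMS n r (cstar_gen n G) \<beta> \<phi>"
    and T: "T \<in> cstar_gen n G" "bop n T" "dyn_eigen n r c T"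
    and B: "B \<in> cstar_gen n G" "bop n B"
    and N: "N \<in> cstar_gen n G" "unimodular_multiple (T \<circ> B) N" "unimodular_multiple (B \<circ> T) N"
    and nonzero: "\<beta> * c \<noteq> 0"
  shows "\<phi> N = 0"
proof -
  obtain v w where v: "cmod v = 1" "T \<circ> B = op_scale v N" and w: "cmod w = 1" "B \<circ> T = op_scale w N"
    using N(2,3) unfolding unimodular_multiple_def by blast
  have st: "is_state n (cstar_gen n G) \<phi>" using KMS by (simp add: is_KMS_def)
  have "v * \<phi> N = (exp (- complex_of_real (\<beta> * c)) * w) * \<phi> N"
    using KMS_dyn_eigen[OF KMS T B] by (simp add: v w state_op_scale[OF st N(1)])
  moreover have "cmod (exp (- complex_of_real (\<beta> * c)) * w) \<noteq> cmod v"
    using nonzero by (simp add: norm_mult v w)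
  ultimately show ?thesis by (metis mult_cancel_right)
qed

section \<open>KMS states of the Toeplitz algebra\<close>

lemma Nn_mono: "k \<le> n \<Longrightarrow> p \<in> Nn k \<Longrightarrow> p \<in> Nn n"
  by (simp add: Nn_def)

lemma pair_r_eq_0: "\<forall>i<k. x i = 0 \<Longrightarrow> \<forall>j. k \<le> j \<longrightarrow> r j = 0 \<Longrightarrow> pair_r n x r = 0"
  unfolding pair_r_def by (intro sum.neutral ballI) (metis mult_eq_0_iff not_le of_nat_0)

lemma pair_r_pos:
  assumes a: "a \<in> Nn k" "a \<noteq> (\<lambda>i. 0)" and r: "\<forall>j<k. r j > 0" and "k \<le> n"
  shows "0 < pair_r n a r"
proof -
  obtain i where i: "a i \<noteq> 0" using a by auto
  have "i < k" using a i by (auto simp: Nn_def not_less[symmetric])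
  have "0 \<le> real (a j) * r j" for j
    using r a by (cases "j < k") (auto simp: Nn_def less_imp_le)
  moreover have "0 < real (a i) * r i" using i r \<open>i < k\<close> by simp
  ultimately show ?thesis
    unfolding pair_r_def using \<open>i < k\<close> \<open>k \<le> n\<close> by (intro sum_pos2[where i=i]) auto
qed

lemma Ut_commuting_Lop: "p \<in> Nn n \<Longrightarrow> pair_r n p r = 0 \<Longrightarrow> Ut_commuting n r (Lop n \<Theta> p)"
  by (simp add: Ut_commuting_def Ut_Lop)

lemma cstar_gen_Lop_subset_Ut_commutant:
  "cstar_gen n {Lop n \<Theta> x | x. x \<in> Nn n \<and> pair_r n x r = 0} \<subseteq> Ut_commutant n r"
  by (rule cstar_gen_minimal[OF cstar_closed_Ut_commutant])
     (auto simp: Ut_commutant_def bop_Lop Ut_commuting_Lop)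

locale Toeplitz_KMS =
  fixes n k :: nat and \<Theta> :: "nat \<Rightarrow> nat \<Rightarrow> real" and r :: "nat \<Rightarrow> real"
    and \<beta> :: real and \<phi> :: "op \<Rightarrow> complex"
  assumes k_le_n: "k \<le> n" and r_pos: "\<forall>j<k. r j > 0" and beta_pos: "0 < \<beta>"
    and KMS: "is_KMS n r (Toeplitz n \<Theta>) \<beta> \<phi>"
begin

abbreviation L :: "idx \<Rightarrow> op" where "L \<equiv> Lop n \<Theta>"

abbreviation A :: "idx \<Rightarrow> op" where "A v \<equiv> adj n (Lop n \<Theta> v)"

lemma KMS_cstar_gen: "is_KMS n r (cstar_gen n {L p | p. p \<in> Nn n}) \<beta> \<phi>"
  using KMS by (simp add: Toeplitz_def)

lemma Lop_in_Toeplitz: "p \<in> Nn n \<Longrightarrow> L p \<in> cstar_gen n {L p | p. p \<in> Nn n}"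
  by (rule subsetD[OF cstar_gen_base]) blast

lemma adj_Lop_in_Toeplitz: "p \<in> Nn n \<Longrightarrow> A p \<in> cstar_gen n {L p | p. p \<in> Nn n}"
  by (intro cstar_gen_adj Lop_in_Toeplitz)

lemma KMS_vanishes_Lop_adj_Lop_left:
  assumes a: "a \<in> Nn k" "a \<noteq> (\<lambda>i. 0)" and x: "x \<in> Nn n" and v: "v \<in> Nn n"
    and av: "\<forall>i. a i = 0 \<or> v i = 0"
  shows "\<phi> (L (\<lambda>i. x i + a i) \<circ> A v) = 0"
proof (rule KMS_vanishes_on_unimodular_multiple[OF KMS_cstar_gen])
  have a': "a \<in> Nn n" using Nn_mono[OF k_le_n a(1)] .
  show "L a \<in> cstar_gen n {L p | p. p \<in> Nn n}" "bop n (L a)" "dyn_eigen n r (pair_r n a r) (L a)"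
    using a' by (simp_all add: Lop_in_Toeplitz bop_Lop dyn_eigen_Lop)
  show "L x \<circ> A v \<in> cstar_gen n {L p | p. p \<in> Nn n}" "bop n (L x \<circ> A v)"
    using x v by (simp_all add: cstar_gen_comp Lop_in_Toeplitz adj_Lop_in_Toeplitz bop_comp bop_Lop bop_adj_Lop)
  show "L (\<lambda>i. x i + a i) \<circ> A v \<in> cstar_gen n {L p | p. p \<in> Nn n}"
    using x a' v by (simp add: cstar_gen_comp Lop_in_Toeplitz adj_Lop_in_Toeplitz Nn_add)
  show "unimodular_multiple (L a \<circ> (L x \<circ> A v)) (L (\<lambda>i. x i + a i) \<circ> A v)"
    using unimodular_multiple_comp[OF unimodular_multiple_Lop_comp_Lop[OF a' x]
        unimodular_multiple_refl bop_Lop[OF Nn_add[OF a' x]]]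
    by (simp add: comp_assoc add.commute)
  have "unimodular_multiple (L x \<circ> A v \<circ> L a) (L x \<circ> L a \<circ> A v)"
    using unimodular_multiple_comp[OF unimodular_multiple_refl
        unimodular_multiple_adj_Lop_comp_Lop_disjoint[OF a' v av] bop_Lop[OF x]]
    by (simp add: comp_assoc)
  moreover have "unimodular_multiple (L x \<circ> L a \<circ> A v) (L (\<lambda>i. x i + a i) \<circ> A v)"
    using unimodular_multiple_comp[OF unimodular_multiple_Lop_comp_Lop[OF x a']
        unimodular_multiple_refl bop_Lop[OF Nn_add[OF x a']]] .
  ultimately show "unimodular_multiple (L x \<circ> A v \<circ> L a) (L (\<lambda>i. x i + a i) \<circ> A v)"
    by (rule unimodular_multiple_trans)
  show "\<beta> * pair_r n a r \<noteq> 0"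
    using beta_pos pair_r_pos[OF a r_pos k_le_n] by simp
qed

lemma KMS_vanishes_Lop_adj_Lop_right:
  assumes b: "b \<in> Nn k" "b \<noteq> (\<lambda>i. 0)" and x: "x \<in> Nn n" and y: "y \<in> Nn n"
    and xb: "\<forall>i. x i = 0 \<or> b i = 0"
  shows "\<phi> (L x \<circ> A (\<lambda>i. y i + b i)) = 0"
proof (rule KMS_vanishes_on_unimodular_multiple[OF KMS_cstar_gen])
  have b': "b \<in> Nn n" using Nn_mono[OF k_le_n b(1)] .
  show "A b \<in> cstar_gen n {L p | p. p \<in> Nn n}" "bop n (A b)" "dyn_eigen n r (- pair_r n b r) (A b)"
    using b' by (simp_all add: adj_Lop_in_Toeplitz bop_adj_Lop dyn_eigen_adj_Lop)
  show "L x \<circ> A y \<in> cstar_gen n {L p | p. p \<in> Nn n}" "bop n (L x \<circ> A y)"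
    using x y by (simp_all add: cstar_gen_comp Lop_in_Toeplitz adj_Lop_in_Toeplitz bop_comp bop_Lop bop_adj_Lop)
  show "L x \<circ> A (\<lambda>i. y i + b i) \<in> cstar_gen n {L p | p. p \<in> Nn n}"
    using x y b' by (simp add: cstar_gen_comp Lop_in_Toeplitz adj_Lop_in_Toeplitz Nn_add)
  have "unimodular_multiple (A b \<circ> (L x \<circ> A y)) (L x \<circ> A b \<circ> A y)"
    using unimodular_multiple_comp[OF unimodular_multiple_adj_Lop_comp_Lop_disjoint[OF x b' xb]
        unimodular_multiple_refl bop_comp[OF bop_Lop[OF x] bop_adj_Lop[OF b']]]
    by (simp add: comp_assoc)
  moreover have "unimodular_multiple (L x \<circ> A b \<circ> A y) (L x \<circ> A (\<lambda>i. y i + b i))"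
    using unimodular_multiple_comp[OF unimodular_multiple_refl
        unimodular_multiple_adj_Lop_comp_adj_Lop[OF b' y] bop_Lop[OF x]]
    by (simp add: comp_assoc add.commute)
  ultimately show "unimodular_multiple (A b \<circ> (L x \<circ> A y)) (L x \<circ> A (\<lambda>i. y i + b i))"
    by (rule unimodular_multiple_trans)
  show "unimodular_multiple (L x \<circ> A y \<circ> A b) (L x \<circ> A (\<lambda>i. y i + b i))"
    using unimodular_multiple_comp[OF unimodular_multiple_refl
        unimodular_multiple_adj_Lop_comp_adj_Lop[OF y b'] bop_Lop[OF x]]
    by (simp add: comp_assoc)
  show "\<beta> * - pair_r n b r \<noteq> 0"
    using beta_pos pair_r_pos[OF b r_pos k_le_n] by simp
qed

lemma KMS_vanishes_Lop_adj_Lop: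
  assumes a: "a \<in> Nn k" and b: "b \<in> Nn k" and ab: "\<forall>i. a i = 0 \<or> b i = 0"
    and nonzero: "a \<noteq> (\<lambda>i. 0) \<or> b \<noteq> (\<lambda>i. 0)"
    and x: "x \<in> Nn n" "\<forall>i<k. x i = 0" and y: "y \<in> Nn n" "\<forall>i<k. y i = 0"
  shows "\<phi> (L (\<lambda>i. x i + a i) \<circ> A (\<lambda>i. y i + b i)) = 0"
proof (cases "a = (\<lambda>i. 0)")
  case False
  have "\<forall>i. a i = 0 \<or> y i + b i = 0"
  proof
    fix i show "a i = 0 \<or> y i + b i = 0"
      using a ab y(2) by (cases "i < k") (auto simp: Nn_def)
  qed
  thus ?thesis
    using KMS_vanishes_Lop_adj_Lop_left[OF a False x(1)] Nn_add[OF y(1) Nn_mono[OF k_le_n b]] by blast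
next
  case True
  have "\<forall>i. x i = 0 \<or> b i = 0"
  proof
    fix i show "x i = 0 \<or> b i = 0"
      using b x(2) by (cases "i < k") (auto simp: Nn_def)
  qed
  thus ?thesis
    using KMS_vanishes_Lop_adj_Lop_right[OF b _ x(1) y(1)] True nonzero by simp
qed

lemma KMS_Lop_Lop_adj_Lop_adj_Lop:
  assumes p: "p \<in> Nn k" and q: "q \<in> Nn k"
    and x: "x \<in> Nn n" "\<forall>i<k. x i = 0" and y: "y \<in> Nn n" "\<forall>i<k. y i = 0"
  shows "\<phi> (L p \<circ> L x \<circ> A y \<circ> A q)
    = (if p = q then exp (- complex_of_real (\<beta> * pair_r n p r)) else 0) * \<phi> (L x \<circ> A y)"
proof -
  have p': "p \<in> Nn n" and q': "q \<in> Nn n" using p q Nn_mono[OF k_le_n] by blast+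
  have B: "L x \<circ> A y \<circ> A q \<in> cstar_gen n {L p | p. p \<in> Nn n}" "bop n (L x \<circ> A y \<circ> A q)"
    using x y q' by (simp_all add: cstar_gen_comp Lop_in_Toeplitz adj_Lop_in_Toeplitz bop_comp bop_Lop bop_adj_Lop)
  have KMS_p: "\<phi> (L p \<circ> L x \<circ> A y \<circ> A q)
      = exp (- complex_of_real (\<beta> * pair_r n p r)) * \<phi> (L x \<circ> A y \<circ> A q \<circ> L p)"
    using KMS_dyn_eigen[OF KMS_cstar_gen Lop_in_Toeplitz[OF p'] bop_Lop[OF p'] dyn_eigen_Lop[OF p'] B]
    by (simp add: comp_assoc)
  show ?thesis
  proof (cases "p = q")
    case True
    hence "L x \<circ> A y \<circ> A q \<circ> L p = L x \<circ> A y"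
      using comp_id_l2[OF bop_comp[OF bop_Lop[OF x(1)] bop_adj_Lop[OF y(1)]]]
      by (simp add: comp_assoc adj_Lop_comp_Lop_self[OF q'])
    thus ?thesis using KMS_p True by simp
  next
    case False
    define c where "c = (\<lambda>i. min (p i) (q i))"
    define a where "a = (\<lambda>i. p i - c i)"
    define b where "b = (\<lambda>i. q i - c i)"
    have abc: "a \<in> Nn k" "b \<in> Nn k" "c \<in> Nn k"
      using p q by (auto simp: Nn_def a_def b_def c_def)
    have pq: "p = (\<lambda>i. a i + c i)" "q = (\<lambda>i. b i + c i)"
      by (auto simp: a_def b_def c_def)
    have ab: "\<forall>i. a i = 0 \<or> b i = 0"
      by (auto simp: a_def b_def c_def)
    have ay: "\<forall>i. a i = 0 \<or> y i = 0"
    proof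
      fix i show "a i = 0 \<or> y i = 0"
        using abc(1) y(2) by (cases "i < k") (auto simp: Nn_def)
    qed
    obtain w where w: "L x \<circ> A y \<circ> A q \<circ> L p = op_scale w (L (\<lambda>i. x i + a i) \<circ> A (\<lambda>i. y i + b i))"
      using unimodular_multiple_Lop_adj_Lop_adj_Lop_Lop[OF abc[THEN Nn_mono[OF k_le_n]] x(1) y(1) ab ay]
      unfolding unimodular_multiple_def pq by blast
    have N: "L (\<lambda>i. x i + a i) \<circ> A (\<lambda>i. y i + b i) \<in> cstar_gen n {L p | p. p \<in> Nn n}"
      using x y abc Nn_mono[OF k_le_n]
      by (simp add: cstar_gen_comp Lop_in_Toeplitz adj_Lop_in_Toeplitz Nn_add)
    have st: "is_state n (cstar_gen n {L p | p. p \<in> Nn n}) \<phi>"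
      using KMS_cstar_gen by (simp add: is_KMS_def)
    have "\<phi> (L (\<lambda>i. x i + a i) \<circ> A (\<lambda>i. y i + b i)) = 0"
      using False pq by (intro KMS_vanishes_Lop_adj_Lop abc ab x y) auto
    thus ?thesis
      using KMS_p False by (simp add: w state_op_scale[OF st N])
  qed
qed

end

theorem proposition3p3:
  fixes k d n :: nat and \<Theta> :: "nat \<Rightarrow> nat \<Rightarrow> real" and r :: "nat \<Rightarrow> real"
    and \<beta> :: real and \<phi> :: "op \<Rightarrow> complex"
  assumes n_def: "n = k + d"
    and antisym: "\<forall>i<n. \<forall>j<n. \<Theta> i j = - \<Theta> j i"
    and r_pos: "\<forall>j<k. r j > 0"
    and r_zero: "\<forall>j. k \<le> j \<longrightarrow> r j = 0"
    and beta_pos: "0 < \<beta>"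
    and KMS: "is_KMS n r (Toeplitz n \<Theta>) \<beta> \<phi>"
  shows "(\<forall>S\<in>cstar_gen n {Lop n \<Theta> x | x. x \<in> Nn n \<and> (\<forall>i<k. x i = 0)}.
            \<forall>T\<in>cstar_gen n {Lop n \<Theta> x | x. x \<in> Nn n \<and> (\<forall>i<k. x i = 0)}.
              \<phi> (S \<circ> T) = \<phi> (T \<circ> S))
      \<and> (\<forall>p q x y. p \<in> Nn k \<and> q \<in> Nn k \<and> x \<in> Nn n \<and> (\<forall>i<k. x i = 0)
              \<and> y \<in> Nn n \<and> (\<forall>i<k. y i = 0) \<longrightarrow>
            \<phi> (Lop n \<Theta> p \<circ> Lop n \<Theta> x \<circ> adj n (Lop n \<Theta> y) \<circ> adj n (Lop n \<Theta> q))
              = (if p = q then exp (- (complex_of_real (\<beta> * pair_r n p r))) else 0)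
                * \<phi> (Lop n \<Theta> x \<circ> adj n (Lop n \<Theta> y)))"
proof -
  interpret Toeplitz_KMS n k \<Theta> r \<beta> \<phi>
    using n_def r_pos beta_pos KMS by unfold_locales simp_all
  let ?G = "{Lop n \<Theta> x | x. x \<in> Nn n \<and> (\<forall>i<k. x i = 0)}"
  have in_Toeplitz: "cstar_gen n ?G \<subseteq> cstar_gen n {Lop n \<Theta> p | p. p \<in> Nn n}"
    by (rule cstar_gen_mono) blast
  have "cstar_gen n ?G \<subseteq> cstar_gen n {Lop n \<Theta> x | x. x \<in> Nn n \<and> pair_r n x r = 0}"
    using pair_r_eq_0[OF _ r_zero] by (intro cstar_gen_mono) blast
  hence in_commutant: "cstar_gen n ?G \<subseteq> Ut_commutant n r"
    using cstar_gen_Lop_subset_Ut_commutant by blast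
  show ?thesis
    using KMS_trace_on_Ut_commutant[OF KMS_cstar_gen] in_Toeplitz in_commutant
      KMS_Lop_Lop_adj_Lop_adj_Lop by blast
qed

end
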